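(* Let $(\mathcal{B},\Psi)$ be a braided monoidal category, $H$ a Hopf algebra in $\mathcal{B}$ with invertible antipode $S$, and $A$ an algebra in $H\text{-}\mathbf{Mod}(\mathcal{B})$ with action $a_A$. Let $\varphi\colon H\otimes A\to A\otimes H$ be the isomorphism $\varphi=\Psi^{-1}_{H,A}(S^{-1}\otimes\mathrm{Id}_A)$, with inverse $\varphi^{-1}=\Psi_{A,H}(\mathrm{Id}_A\otimes S)$. Then the object $A\rtimes H=A\otimes H$ of $\mathcal{B}$ with $H$-action and $H$-coaction $$a^{\rtimes}=(\mathrm{Id}_A\otimes m_H)\Psi^{-1}_{H,A\otimes H}(S^{-1}\otimes a_{A\otimes H})(\Delta_H\otimes\mathrm{Id}_{A\otimes H}),\qquad \delta^{\rtimes}=(S\otimes\mathrm{Id}_{A\otimes H})\Psi_{A\otimes H,H}(\mathrm{Id}_A\otimes\Delta_H)$$ is an $H$-Yetter–Drinfeld module in $\mathcal{B}$, namely the one obtained by transporting the Yetter–Drinfeld structure of $\mathrm{R}_{\mathcal{B}}(A)=H\otimes A$ along $\varphi$, i.e. $a^{\rtimes}=\varphi a^{\mathrm{R}}(\mathrm{Id}_H\otimes\varphi^{-1})$ and $\delta^{\rtimes}=(\mathrm{Id}_H\otimes\varphi)\delta^{\mathrm{R}}\varphi^{-1}$; in particular $\varphi$ is an isomorphism of Yetter–Drinfeld modules.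
   Context: All categories are $\Bbbk$-linear abelian monoidal over a field $\Bbbk$. Notation: for objects $X,Y$, $\Psi^{-1}_{X,Y}:=(\Psi_{Y,X})^{-1}\colon X\otimes Y\to Y\otimes X$. $H\text{-}\mathbf{Mod}(\mathcal{B})$ is the monoidal category of left $H$-modules in $\mathcal{B}$, with $a_{V\otimes W}=(a_V\otimes a_W)(\mathrm{Id}_H\otimes\Psi_{H,V}\otimes\mathrm{Id}_W)(\Delta\otimes\mathrm{Id}_{V\otimes W})$; here $H$ acts on itself by left multiplication, so $a_{A\otimes H}$ is this formula with $a_H=m_H$. An $H$-Yetter–Drinfeld module in $\mathcal{B}$ is $(V,a_V,\delta_V)$ with $a_V$ a left $H$-action, $\delta_V$ a left $H$-coaction in $\mathcal{B}$, satisfying $(m\otimes a_V)(\mathrm{Id}_H\otimes\Psi_{H,H}\otimes\mathrm{Id}_V)(\Delta\otimes\delta_V)=(m\otimes\mathrm{Id}_V)(\mathrm{Id}_H\otimes\Psi_{V,H})(\delta_V\otimes\mathrm{Id}_H)(a_V\otimes\mathrm{Id}_H)(\mathrm{Id}_H\otimes\Psi_{H,V})(\Delta\otimes\mathrm{Id}_V)$. $\mathrm{R}_{\mathcal{B}}(A)$ is $H\otimes A$ with action $a^{\mathrm{R}}=(m\otimes\mathrm{Id}_A)(\mathrm{Id}_H\otimes\Psi_{A,H})(\mathrm{Id}_H\otimes a_A\otimes S)(\mathrm{Id}_{H\otimes H}\otimes\Psi_{H,A})(m\otimes\Delta\otimes\mathrm{Id}_A)(\mathrm{Id}_H\otimes\Psi_{H,H}\otimes\mathrm{Id}_A)(\Delta\otimes\mathrm{Id}_{H\otimes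 A})$ and coaction $\delta^{\mathrm{R}}=\Delta\otimes\mathrm{Id}_A$ (this is a Yetter–Drinfeld module in $\mathcal{B}$). $A\rtimes H$ denotes $A\otimes H$, the underlying object of the braided smash product algebra. *)

theory Defs
  imports Main
begin

text \<open>Composition Cmp C g f means g after f.\<close>

record ('o, 'm) bcat =
  Dom :: "'m \<Rightarrow> 'o"
  Cod :: "'m \<Rightarrow> 'o"
  Cmp :: "'m \<Rightarrow> 'm \<Rightarrow> 'm"
  Idm :: "'o \<Rightarrow> 'm"
  Tob :: "'o \<Rightarrow> 'o \<Rightarrow> 'o"
  Tm  :: "'m \<Rightarrow> 'm \<Rightarrow> 'm"
  Uob :: "'o"
  Br  :: "'o \<Rightarrow> 'o \<Rightarrow> 'm"

definition hom :: "('o,'m) bcat \<Rightarrow> 'm \<Rightarrow> 'o \<Rightarrow> 'o \<Rightarrow> bool" where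
  "hom C f X Y \<longleftrightarrow> Dom C f = X \<and> Cod C f = Y"

definition iso :: "('o,'m) bcat \<Rightarrow> 'm \<Rightarrow> bool" where
  "iso C f \<longleftrightarrow> (\<exists>g. hom C g (Cod C f) (Dom C f) \<and>
      Cmp C g f = Idm C (Dom C f) \<and> Cmp C f g = Idm C (Cod C f))"

definition inv :: "('o,'m) bcat \<Rightarrow> 'm \<Rightarrow> 'm" where
  "inv C f = (THE g. hom C g (Cod C f) (Dom C f) \<and>
      Cmp C g f = Idm C (Dom C f) \<and> Cmp C f g = Idm C (Cod C f))"

text \<open>Composite of a list of morphisms, written in the paper's order:
chain C [f1, f2, ..., fn] = f1 after f2 after ... after fn.\<close>
fun chain :: "('o,'m) bcat \<Rightarrow> 'm list \<Rightarrow> 'm" where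
  "chain C [] = undefined"
| "chain C [f] = f"
| "chain C (f # g # fs) = Cmp C f (chain C (g # fs))"

text \<open>Inverse braiding: Binv C X Y = (Br C Y X)^{-1} : X \<otimes> Y \<rightarrow> Y \<otimes> X.\<close>
definition Binv :: "('o,'m) bcat \<Rightarrow> 'o \<Rightarrow> 'o \<Rightarrow> 'm" where
  "Binv C X Y = inv C (Br C Y X)"

definition braided_monoidal_cat :: "('o,'m) bcat \<Rightarrow> bool" where
  "braided_monoidal_cat C \<longleftrightarrow>
    \<comment> \<open>category\<close>
    (\<forall>X. hom C (Idm C X) X X) \<and>
    (\<forall>f g. Cod C f = Dom C g \<longrightarrow> hom C (Cmp C g f) (Dom C f) (Cod C g)) \<and>
    (\<forall>f g h. Cod C f = Dom C g \<longrightarrow> Cod C g = Dom C h \<longrightarrow>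
        Cmp C h (Cmp C g f) = Cmp C (Cmp C h g) f) \<and>
    (\<forall>f. Cmp C f (Idm C (Dom C f)) = f \<and> Cmp C (Idm C (Cod C f)) f = f) \<and>
    \<comment> \<open>strict monoidal structure\<close>
    (\<forall>X Y Z. Tob C (Tob C X Y) Z = Tob C X (Tob C Y Z)) \<and>
    (\<forall>X. Tob C (Uob C) X = X \<and> Tob C X (Uob C) = X) \<and>
    (\<forall>f g. hom C (Tm C f g) (Tob C (Dom C f) (Dom C g)) (Tob C (Cod C f) (Cod C g))) \<and>
    (\<forall>X Y. Tm C (Idm C X) (Idm C Y) = Idm C (Tob C X Y)) \<and>
    (\<forall>f g f' g'. Cod C f = Dom C g \<longrightarrow> Cod C f' = Dom C g' \<longrightarrow>
        Tm C (Cmp C g f) (Cmp C g' f') = Cmp C (Tm C g g') (Tm C f f')) \<and>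
    (\<forall>f g h. Tm C (Tm C f g) h = Tm C f (Tm C g h)) \<and>
    (\<forall>f. Tm C (Idm C (Uob C)) f = f \<and> Tm C f (Idm C (Uob C)) = f) \<and>
    \<comment> \<open>braiding: natural isomorphism satisfying the hexagon axioms\<close>
    (\<forall>X Y. hom C (Br C X Y) (Tob C X Y) (Tob C Y X) \<and> iso C (Br C X Y)) \<and>
    (\<forall>f g. Cmp C (Br C (Cod C f) (Cod C g)) (Tm C f g)
           = Cmp C (Tm C g f) (Br C (Dom C f) (Dom C g))) \<and>
    (\<forall>X Y Z. Br C X (Tob C Y Z)
        = Cmp C (Tm C (Idm C Y) (Br C X Z)) (Tm C (Br C X Y) (Idm C Z))) \<and>
    (\<forall>X Y Z. Br C (Tob C X Y) Z
        = Cmp C (Tm C (Br C X Z) (Idm C Y)) (Tm C (Idm C X) (Br C Y Z)))"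

definition hopf_algebra ::
  "('o,'m) bcat \<Rightarrow> 'o \<Rightarrow> 'm \<Rightarrow> 'm \<Rightarrow> 'm \<Rightarrow> 'm \<Rightarrow> 'm \<Rightarrow> bool" where
  "hopf_algebra C H m u \<Delta> \<epsilon> S \<longleftrightarrow>
    (let I = Idm C H; HH = Tob C H H in
    hom C m HH H \<and> hom C u (Uob C) H \<and> hom C \<Delta> H HH \<and> hom C \<epsilon> H (Uob C) \<and>
    hom C S H H \<and>
    Cmp C m (Tm C m I) = Cmp C m (Tm C I m) \<and>
    Cmp C m (Tm C u I) = I \<and> Cmp C m (Tm C I u) = I \<and>
    Cmp C (Tm C \<Delta> I) \<Delta> = Cmp C (Tm C I \<Delta>) \<Delta> \<and>
    Cmp C (Tm C \<epsilon> I) \<Delta> = I \<and> Cmp C (Tm C I \<epsilon>) \<Delta> = I \<and>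
    Cmp C \<Delta> m = chain C [Tm C m m, Tm C (Tm C I (Br C H H)) I, Tm C \<Delta> \<Delta>] \<and>
    Cmp C \<Delta> u = Tm C u u \<and>
    Cmp C \<epsilon> m = Tm C \<epsilon> \<epsilon> \<and>
    Cmp C \<epsilon> u = Idm C (Uob C) \<and>
    chain C [m, Tm C S I, \<Delta>] = Cmp C u \<epsilon> \<and>
    chain C [m, Tm C I S, \<Delta>] = Cmp C u \<epsilon>)"

definition hmodule :: "('o,'m) bcat \<Rightarrow> 'o \<Rightarrow> 'm \<Rightarrow> 'm \<Rightarrow> 'o \<Rightarrow> 'm \<Rightarrow> bool" where
  "hmodule C H m u V a \<longleftrightarrow>
    hom C a (Tob C H V) V \<and>
    Cmp C a (Tm C m (Idm C V)) = Cmp C a (Tm C (Idm C H) a) \<and>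
    Cmp C a (Tm C u (Idm C V)) = Idm C V"

definition hcomodule :: "('o,'m) bcat \<Rightarrow> 'o \<Rightarrow> 'm \<Rightarrow> 'm \<Rightarrow> 'o \<Rightarrow> 'm \<Rightarrow> bool" where
  "hcomodule C H \<Delta> \<epsilon> V \<delta> \<longleftrightarrow>
    hom C \<delta> V (Tob C H V) \<and>
    Cmp C (Tm C \<Delta> (Idm C V)) \<delta> = Cmp C (Tm C (Idm C H) \<delta>) \<delta> \<and>
    Cmp C (Tm C \<epsilon> (Idm C V)) \<delta> = Idm C V"

definition tens_act :: "('o,'m) bcat \<Rightarrow> 'o \<Rightarrow> 'm \<Rightarrow> 'o \<Rightarrow> 'm \<Rightarrow> 'o \<Rightarrow> 'm \<Rightarrow> 'm" where
  "tens_act C H \<Delta> V aV W aW =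
    chain C [Tm C aV aW, Tm C (Tm C (Idm C H) (Br C H V)) (Idm C W),
             Tm C \<Delta> (Idm C (Tob C V W))]"

text \<open>Algebra (A, mA, uA) in H-Mod(C), with H-action aA; the unit object carries
the trivial action \<epsilon>.\<close>
definition hmod_algebra ::
  "('o,'m) bcat \<Rightarrow> 'o \<Rightarrow> 'm \<Rightarrow> 'm \<Rightarrow> 'm \<Rightarrow> 'm \<Rightarrow> 'o \<Rightarrow> 'm \<Rightarrow> 'm \<Rightarrow> 'm \<Rightarrow> bool" where
  "hmod_algebra C H m u \<Delta> \<epsilon> A aA mA uA \<longleftrightarrow>
    hmodule C H m u A aA \<and>
    hom C mA (Tob C A A) A \<and> hom C uA (Uob C) A \<and>
    Cmp C mA (Tm C mA (Idm C A)) = Cmp C mA (Tm C (Idm C A) mA) \<and>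
    Cmp C mA (Tm C uA (Idm C A)) = Idm C A \<and>
    Cmp C mA (Tm C (Idm C A) uA) = Idm C A \<and>
    Cmp C aA (Tm C (Idm C H) mA) = Cmp C mA (tens_act C H \<Delta> A aA A aA) \<and>
    Cmp C aA (Tm C (Idm C H) uA) = Cmp C uA \<epsilon>"

definition yd_module ::
  "('o,'m) bcat \<Rightarrow> 'o \<Rightarrow> 'm \<Rightarrow> 'm \<Rightarrow> 'm \<Rightarrow> 'm \<Rightarrow> 'o \<Rightarrow> 'm \<Rightarrow> 'm \<Rightarrow> bool" where
  "yd_module C H m u \<Delta> \<epsilon> V a \<delta> \<longleftrightarrow>
    hmodule C H m u V a \<and> hcomodule C H \<Delta> \<epsilon> V \<delta> \<and>
    chain C [Tm C m a, Tm C (Tm C (Idm C H) (Br C H H)) (Idm C V), Tm C \<Delta> \<delta>]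
    = chain C [Tm C m (Idm C V), Tm C (Idm C H) (Br C V H), Tm C \<delta> (Idm C H),
               Tm C a (Idm C H), Tm C (Idm C H) (Br C H V), Tm C \<Delta> (Idm C V)]"

definition yd_morphism ::
  "('o,'m) bcat \<Rightarrow> 'o \<Rightarrow> 'o \<Rightarrow> 'm \<Rightarrow> 'm \<Rightarrow> 'o \<Rightarrow> 'm \<Rightarrow> 'm \<Rightarrow> 'm \<Rightarrow> bool" where
  "yd_morphism C H V aV \<delta>V W aW \<delta>W f \<longleftrightarrow>
    hom C f V W \<and>
    Cmp C aW (Tm C (Idm C H) f) = Cmp C f aV \<and>
    Cmp C \<delta>W f = Cmp C (Tm C (Idm C H) f) \<delta>V"

definition R_act :: "('o,'m) bcat \<Rightarrow> 'o \<Rightarrow> 'm \<Rightarrow> 'm \<Rightarrow> 'm \<Rightarrow> 'o \<Rightarrow> 'm \<Rightarrow> 'm" where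
  "R_act C H m \<Delta> S A aA =
    (let IH = Idm C H; IA = Idm C A in
     chain C [Tm C m IA, Tm C IH (Br C A H), Tm C (Tm C IH aA) S,
              Tm C (Idm C (Tob C H H)) (Br C H A), Tm C (Tm C m \<Delta>) IA,
              Tm C (Tm C IH (Br C H H)) IA, Tm C \<Delta> (Idm C (Tob C H A))])"

definition R_coact :: "('o,'m) bcat \<Rightarrow> 'm \<Rightarrow> 'o \<Rightarrow> 'm" where
  "R_coact C \<Delta> A = Tm C \<Delta> (Idm C A)"

definition smash_act :: "('o,'m) bcat \<Rightarrow> 'o \<Rightarrow> 'm \<Rightarrow> 'm \<Rightarrow> 'm \<Rightarrow> 'o \<Rightarrow> 'm \<Rightarrow> 'm" where
  "smash_act C H m \<Delta> S A aA =
    chain C [Tm C (Idm C A) m, Binv C H (Tob C A H),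
             Tm C (inv C S) (tens_act C H \<Delta> A aA H m),
             Tm C \<Delta> (Idm C (Tob C A H))]"

definition smash_coact :: "('o,'m) bcat \<Rightarrow> 'o \<Rightarrow> 'm \<Rightarrow> 'm \<Rightarrow> 'o \<Rightarrow> 'm" where
  "smash_coact C H \<Delta> S A =
    chain C [Tm C S (Idm C (Tob C A H)), Br C (Tob C A H) H, Tm C (Idm C A) \<Delta>]"

definition phi :: "('o,'m) bcat \<Rightarrow> 'o \<Rightarrow> 'm \<Rightarrow> 'o \<Rightarrow> 'm" where
  "phi C H S A = Cmp C (Binv C H A) (Tm C (inv C S) (Idm C A))"

end

theory Submission
  imports Defs
begin

text \<open>The map \<phi> is the composite of the isomorphisms S^-1 \<otimes> Id and \<Psi>^-1, and
naturality of the braiding moves S across \<Psi>, which gives the stated inverse. Transport along an isomorphism preserves the Yetter-Drinfeld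
axioms and makes the isomorphism a morphism of Yetter-Drinfeld modules, so everything reduces to
R(A) being a Yetter-Drinfeld module, which in turn rests on the anti-(co)multiplicativity of the
antipode.

All identities between composites are proved in the graphical calculus: a diagram is a list of
layers, and interchanging independent layers, braiding naturality and already established local
identities preserve its interpretation in the braided category.\<close>

section \<open>Braided strict monoidal categories\<close>

locale braided_cat =
  fixes C :: "('o,'m) bcat"
  assumes braided: "braided_monoidal_cat C"
begin

lemma id_hom: "hom C (Idm C X) X X"
  and cmp_hom: "Cod C f = Dom C g \<Longrightarrow> hom C (Cmp C g f) (Dom C f) (Cod C g)"
  and cmp_assoc: "Cod C f = Dom C g \<Longrightarrow> Cod C g = Dom C h \<Longrightarrow>
        Cmp C h (Cmp C g f) = Cmp C (Cmp C h g) f"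
  and cmp_id_right: "Cmp C f (Idm C (Dom C f)) = f"
  and cmp_id_left: "Cmp C (Idm C (Cod C f)) f = f"
  and tob_assoc: "Tob C (Tob C X Y) Z = Tob C X (Tob C Y Z)"
  and tob_unit_left: "Tob C (Uob C) X = X"
  and tob_unit_right: "Tob C X (Uob C) = X"
  and tm_hom: "hom C (Tm C f g) (Tob C (Dom C f) (Dom C g)) (Tob C (Cod C f) (Cod C g))"
  and tm_id: "Tm C (Idm C X) (Idm C Y) = Idm C (Tob C X Y)"
  and interchange: "Cod C f = Dom C g \<Longrightarrow> Cod C f' = Dom C g' \<Longrightarrow>
        Tm C (Cmp C g f) (Cmp C g' f') = Cmp C (Tm C g g') (Tm C f f')"
  and tm_assoc: "Tm C (Tm C f g) h = Tm C f (Tm C g h)"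
  and tm_unit_left: "Tm C (Idm C (Uob C)) f = f"
  and tm_unit_right: "Tm C f (Idm C (Uob C)) = f"
  and br_hom: "hom C (Br C X Y) (Tob C X Y) (Tob C Y X)"
  and br_iso: "iso C (Br C X Y)"
  and br_natural: "Cmp C (Br C (Cod C f) (Cod C g)) (Tm C f g)
                 = Cmp C (Tm C g f) (Br C (Dom C f) (Dom C g))"
  and br_hexagon_right: "Br C X (Tob C Y Z)
                 = Cmp C (Tm C (Idm C Y) (Br C X Z)) (Tm C (Br C X Y) (Idm C Z))"
  and br_hexagon_left: "Br C (Tob C X Y) Z
                 = Cmp C (Tm C (Br C X Z) (Idm C Y)) (Tm C (Idm C X) (Br C Y Z))"
  using braided unfolding braided_monoidal_cat_def by meson+

lemma dom_id [simp]: "Dom C (Idm C X) = X" and cod_id [simp]: "Cod C (Idm C X) = X"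
  using id_hom[of X] by (auto simp: hom_def)

lemma dom_cmp [simp]: "Cod C f = Dom C g \<Longrightarrow> Dom C (Cmp C g f) = Dom C f"
  and cod_cmp [simp]: "Cod C f = Dom C g \<Longrightarrow> Cod C (Cmp C g f) = Cod C g"
  using cmp_hom[of f g] by (auto simp: hom_def)

lemma dom_tm [simp]: "Dom C (Tm C f g) = Tob C (Dom C f) (Dom C g)"
  and cod_tm [simp]: "Cod C (Tm C f g) = Tob C (Cod C f) (Cod C g)"
  using tm_hom[of f g] by (auto simp: hom_def)

lemma dom_br [simp]: "Dom C (Br C X Y) = Tob C X Y"
  and cod_br [simp]: "Cod C (Br C X Y) = Tob C Y X"
  using br_hom[of X Y] by (auto simp: hom_def)

lemma cmp_id_left' [simp]: "Cod C f = X \<Longrightarrow> Cmp C (Idm C X) f = f"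
  and cmp_id_right' [simp]: "Dom C f = X \<Longrightarrow> Cmp C f (Idm C X) = f"
  using cmp_id_left cmp_id_right by blast+

lemmas strict_simps [simp] =
  tob_assoc tob_unit_left tob_unit_right tm_assoc tm_unit_left tm_unit_right

lemma idm_tob: "Idm C (Tob C X Y) = Tm C (Idm C X) (Idm C Y)"
  by (simp add: tm_id)

lemma cmp_assoc': "Cod C f = Dom C g \<Longrightarrow> Cod C g = Dom C h \<Longrightarrow>
    Cmp C (Cmp C h g) f = Cmp C h (Cmp C g f)"
  by (simp add: cmp_assoc)

lemma interchange': "Dom C g = Cod C f \<Longrightarrow> Dom C g' = Cod C f' \<Longrightarrow>
    Cmp C (Tm C g g') (Tm C f f') = Tm C (Cmp C g f) (Cmp C g' f')"
  by (simp add: interchange)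

lemma cmp_cancel_left: "Cmp C i g = Idm C (Dom C g) \<Longrightarrow> Cod C f = Dom C g \<Longrightarrow> Cod C g = Dom C i \<Longrightarrow>
    Cmp C i (Cmp C g f) = f"
  by (simp add: cmp_assoc)

lemma inv_unique:
  assumes g: "hom C g (Cod C f) (Dom C f)" "Cmp C g f = Idm C (Dom C f)" "Cmp C f g
      = Idm C (Cod C f)"
  shows "inv C f = g"
  unfolding inv_def
proof (rule the_equality)
  fix h assume h: "hom C h (Cod C f) (Dom C f) \<and> Cmp C h f = Idm C (Dom C f) \<and> Cmp C f h
      = Idm C (Cod C f)"
  have "h = Cmp C h (Cmp C f g)" using h g by (simp add: hom_def)
  also have "\<dots> = Cmp C (Cmp C h f) g" using h g by (intro cmp_assoc) (auto simp: hom_def)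
  finally show "h = g" using h g by (simp add: hom_def)
qed (use g in blast)

lemma iso_inv:
  assumes "iso C f"
  shows inv_hom: "hom C (inv C f) (Cod C f) (Dom C f)"
    and inv_cmp_self: "Cmp C (inv C f) f = Idm C (Dom C f)"
    and cmp_inv_self: "Cmp C f (inv C f) = Idm C (Cod C f)"
proof -
  obtain g where g: "hom C g (Cod C f) (Dom C f)" "Cmp C g f = Idm C (Dom C f)" "Cmp C f g
      = Idm C (Cod C f)"
    using assms unfolding iso_def by blast
  with inv_unique have "inv C f = g" by blast
  with g show "hom C (inv C f) (Cod C f) (Dom C f)" "Cmp C (inv C f) f = Idm C (Dom C f)"
      "Cmp C f (inv C f) = Idm C (Cod C f)" by auto
qed

lemma iso_inverse_pair:
  assumes "hom C g (Cod C f) (Dom C f)" "Cmp C g f = Idm C (Dom C f)" "Cmp C f g = Idm C (Cod C f)"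
  shows "iso C f" "inv C f = g"
  using assms inv_unique unfolding iso_def by blast+

lemma iso_inv_inv:
  assumes "iso C f"
  shows "iso C (inv C f)" "inv C (inv C f) = f"
  using iso_inverse_pair[of f "inv C f"] iso_inv[OF assms] by (simp_all add: hom_def)

lemma dom_inv: "iso C f \<Longrightarrow> Dom C (inv C f) = Cod C f"
  and cod_inv: "iso C f \<Longrightarrow> Cod C (inv C f) = Dom C f"
  using inv_hom by (auto simp: hom_def)

lemma inv_id: "inv C (Idm C X) = Idm C X"
  by (rule inv_unique) (simp_all add: hom_def)

lemma iso_cmp:
  assumes f: "iso C f" and g: "iso C g" and fg: "Cod C f = Dom C g"
  shows "iso C (Cmp C g f)" "inv C (Cmp C g f) = Cmp C (inv C f) (inv C g)"
proof -
  note F = iso_inv[OF f] and G = iso_inv[OF g]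
  have "hom C (Cmp C (inv C f) (inv C g)) (Cod C (Cmp C g f)) (Dom C (Cmp C g f))"
    "Cmp C (Cmp C (inv C f) (inv C g)) (Cmp C g f) = Idm C (Dom C (Cmp C g f))"
    "Cmp C (Cmp C g f) (Cmp C (inv C f) (inv C g)) = Idm C (Cod C (Cmp C g f))"
    using F G fg by (simp_all add: hom_def cmp_assoc' cmp_cancel_left)
  then show "iso C (Cmp C g f)" "inv C (Cmp C g f) = Cmp C (inv C f) (inv C g)"
    by (rule iso_inverse_pair)+
qed

lemma iso_tm:
  assumes f: "iso C f" and g: "iso C g"
  shows "iso C (Tm C f g)" "inv C (Tm C f g) = Tm C (inv C f) (inv C g)"
proof -
  note F = iso_inv[OF f] and G = iso_inv[OF g]
  have "hom C (Tm C (inv C f) (inv C g)) (Cod C (Tm C f g)) (Dom C (Tm C f g))"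
    "Cmp C (Tm C (inv C f) (inv C g)) (Tm C f g) = Idm C (Dom C (Tm C f g))"
    "Cmp C (Tm C f g) (Tm C (inv C f) (inv C g)) = Idm C (Cod C (Tm C f g))"
    using F G by (simp_all add: hom_def interchange' tm_id)
  then show "iso C (Tm C f g)" "inv C (Tm C f g) = Tm C (inv C f) (inv C g)"
    by (rule iso_inverse_pair)+
qed

lemma inv_naturality:
  assumes al: "iso C \<alpha>" and be: "iso C \<beta>" and sq: "Cmp C \<beta> f = Cmp C g \<alpha>"
    and ty: "Cod C f = Dom C \<beta>" "Dom C f = Dom C \<alpha>" "Dom C g = Cod C \<alpha>" "Cod C g = Cod C \<beta>"
  shows "Cmp C f (inv C \<alpha>) = Cmp C (inv C \<beta>) g"
proof -
  note A = iso_inv[OF al] and B = iso_inv[OF be]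
  have "Cmp C (inv C \<beta>) g = Cmp C (inv C \<beta>) (Cmp C (Cmp C g \<alpha>) (inv C \<alpha>))"
    using A ty by (simp add: hom_def cmp_assoc')
  also have "\<dots> = Cmp C (inv C \<beta>) (Cmp C \<beta> (Cmp C f (inv C \<alpha>)))"
    using A B ty by (simp add: sq[symmetric] hom_def cmp_assoc')
  also have "\<dots> = Cmp C f (inv C \<alpha>)"
    using A B ty by (intro cmp_cancel_left) (auto simp: hom_def)
  finally show ?thesis ..
qed

lemma iso_idempotent_id:
  assumes "iso C f" "Cmp C f f = f" "Dom C f = X" "Cod C f = X"
  shows "f = Idm C X"
  using cmp_cancel_left[of "inv C f" f f] iso_inv[OF assms(1)] assms(2-) by (simp add: hom_def)

text \<open>The hexagon axioms make the braidings with the unit object idempotent.\<close>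

lemma br_unit_left: "Br C (Uob C) X = Idm C X"
  using br_hexagon_left[of "Uob C" "Uob C" X] by (intro iso_idempotent_id br_iso) simp_all

lemma br_unit_right: "Br C X (Uob C) = Idm C X"
  using br_hexagon_right[of X "Uob C" "Uob C"] by (intro iso_idempotent_id br_iso) simp_all

lemma iso_id: "iso C (Idm C X)"
  by (rule iso_inverse_pair[of "Idm C X"]) (simp_all add: hom_def)

lemma binv_hexagon_left: "Binv C (Tob C X Y) Z
    = Cmp C (Tm C (Binv C X Z) (Idm C Y)) (Tm C (Idm C X) (Binv C Y Z))"
  using iso_cmp(2)[OF iso_tm(1)[OF br_iso iso_id] iso_tm(1)[OF iso_id br_iso]]
    iso_tm(2)[OF br_iso iso_id] iso_tm(2)[OF iso_id br_iso]
  by (simp add: Binv_def br_hexagon_right inv_id)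

lemma binv_hexagon_right: "Binv C Z (Tob C X Y)
    = Cmp C (Tm C (Idm C X) (Binv C Z Y)) (Tm C (Binv C Z X) (Idm C Y))"
  using iso_cmp(2)[OF iso_tm(1)[OF iso_id br_iso] iso_tm(1)[OF br_iso iso_id]]
    iso_tm(2)[OF br_iso iso_id] iso_tm(2)[OF iso_id br_iso]
  by (simp add: Binv_def br_hexagon_left inv_id)

lemma dom_binv [simp]: "Dom C (Binv C X Y) = Tob C X Y"
  and cod_binv [simp]: "Cod C (Binv C X Y) = Tob C Y X"
  using dom_inv[OF br_iso[of Y X]] cod_inv[OF br_iso[of Y X]] by (simp_all add: Binv_def)

end

section \<open>String diagrams\<close>

text \<open>A string diagram is encoded by the list of its input wires (labels interpreted as
objects) and a list of layers, read bottom-up: the layer (n, g) applies the node g to the wires at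
positions n, ..., n + length (ndom g) - 1 and leaves the other wires alone.\<close>

class diagram_signature =
  fixes box_dom box_cod :: "'a \<Rightarrow> nat list"

datatype 'b node = Box 'b | Brd nat nat | BrdI nat nat

fun ndom :: "'b::diagram_signature node \<Rightarrow> nat list" where
  "ndom (Box b) = box_dom b" | "ndom (Brd x y) = [x,y]" | "ndom (BrdI x y) = [x,y]"

fun ncod :: "'b::diagram_signature node \<Rightarrow> nat list" where
  "ncod (Box b) = box_cod b" | "ncod (Brd x y) = [y,x]" | "ncod (BrdI x y) = [y,x]"

type_synonym 'b layer = "nat \<times> 'b node"
type_synonym 'b rule = "nat list \<times> 'b layer list \<times> 'b layer list"

definition after_node :: "nat \<Rightarrow> 'b::diagram_signature node \<Rightarrow> nat list \<Rightarrow> nat list" where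
  "after_node n g W = take n W @ ncod g @ drop (n + length (ndom g)) W"

fun out_wires :: "nat list \<Rightarrow> 'b::diagram_signature layer list \<Rightarrow> nat list" where
  "out_wires W [] = W"
| "out_wires W ((n,g)#d) = out_wires (after_node n g W) d"

definition fits :: "nat \<Rightarrow> nat list \<Rightarrow> nat list \<Rightarrow> bool" where
  "fits n dg W = (n + length dg \<le> length W \<and> take (length dg) (drop n W) = dg)"

fun well_typed :: "nat list \<Rightarrow> 'b::diagram_signature layer list \<Rightarrow> bool" where
  "well_typed W [] = True"
| "well_typed W ((n,g)#d) = (fits n (ndom g) W \<and> well_typed (after_node n g W) d)"

definition shift :: "nat \<Rightarrow> 'b::diagram_signature layer list \<Rightarrow> 'b layer list" where
  "shift p l = map (\<lambda>(n,g). (n+p,g)) l"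

fun commute_pair :: "'b::diagram_signature layer \<Rightarrow> 'b layer \<Rightarrow> ('b layer \<times> 'b layer) option" where
  "commute_pair (n1,g1) (n2,g2) =
    (if n1 + length (ncod g1) \<le> n2 then Some
        ((n2 + length (ndom g1) - length (ncod g1), g2), (n1,g1))
     else if n2 + length (ndom g2) \<le> n1 then Some
         ((n2,g2), (n1 + length (ncod g2) - length (ndom g2), g1))
     else None)"

fun swap_at :: "nat \<Rightarrow> 'b::diagram_signature layer list \<Rightarrow> 'b layer list option" where
  "swap_at 0 (a#b#d) = (case commute_pair a b of None \<Rightarrow> None | Some (b',a') \<Rightarrow> Some (b'#a'#d))"
| "swap_at (Suc i) (a#d) = map_option (Cons a) (swap_at i d)"
| "swap_at _ _ = None"

fun rewrite_at :: "nat \<Rightarrow> nat \<Rightarrow> 'b::diagram_signature rule \<Rightarrow> nat list \<Rightarrow> 'b layer list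
    \<Rightarrow> 'b layer list option" where
  "rewrite_at 0 p (X,l,r) W d =
     (if fits p X W \<and> take (length l) d = shift p l
      then Some (shift p r @ drop (length l) d) else None)"
| "rewrite_at (Suc i) p R W (a#d)
    = map_option (Cons a) (rewrite_at i p R (after_node (fst a) (snd a) W) d)"
| "rewrite_at (Suc i) p R W [] = None"

text \<open>A rule (X, l, r) asserts that the diagrams l and r on the input wires X are equal.
Sw i interchanges the independent layers i and i + 1; Rw i p R replaces an occurrence of the left
side of R that starts at layer i and wire p by the right side; Rv i p R rewrites from right to
left.\<close>

datatype 'b op = Sw nat | Rw nat nat "'b rule" | Rv nat nat "'b rule"

fun flip_rule :: "'b::diagram_signature rule \<Rightarrow> 'b rule" where
  "flip_rule (X,l,r) = (X,r,l)"

fun run :: "nat list \<Rightarrow> 'b::diagram_signature op list \<Rightarrow> 'b layer list \<Rightarrow> 'b layer list option" where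
  "run W [] d = Some d"
| "run W (Sw i # os) d = (case swap_at i d of None \<Rightarrow> None | Some d' \<Rightarrow> run W os d')"
| "run W (Rw i p R # os) d = (case rewrite_at i p R W d of None \<Rightarrow> None | Some d' \<Rightarrow> run W os d')"
| "run W (Rv i p R # os) d
    = (case rewrite_at i p (flip_rule R) W d of None \<Rightarrow> None | Some d' \<Rightarrow> run W os d')"

fun op_rules :: "'b::diagram_signature op list \<Rightarrow> 'b rule list" where
  "op_rules [] = []"
| "op_rules (Sw i # os) = op_rules os"
| "op_rules (Rw i p R # os) = R # op_rules os"
| "op_rules (Rv i p R # os) = R # op_rules os"

fun brL :: "nat list \<Rightarrow> nat \<Rightarrow> 'b::diagram_signature layer list" where
  "brL [] y = []" | "brL (x#xs) y = shift 1 (brL xs y) @ [(0, Brd x y)]"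
fun brR :: "nat \<Rightarrow> nat list \<Rightarrow> 'b::diagram_signature layer list" where
  "brR y [] = []" | "brR y (x#xs) = (0, Brd y x) # shift 1 (brR y xs)"
fun biL :: "nat list \<Rightarrow> nat \<Rightarrow> 'b::diagram_signature layer list" where
  "biL [] y = []" | "biL (x#xs) y = shift 1 (biL xs y) @ [(0, BrdI x y)]"
fun biR :: "nat \<Rightarrow> nat list \<Rightarrow> 'b::diagram_signature layer list" where
  "biR y [] = []" | "biR y (x#xs) = (0, BrdI y x) # shift 1 (biR y xs)"

datatype 'b dterm = EG "'b node" | EI "nat list" | EC "'b dterm" "'b dterm"
  | ET "'b dterm" "'b dterm" | EBL "nat list" nat | EBR nat "nat list"
  | EIL "nat list" nat | EIR nat "nat list"

fun term_dom :: "'b::diagram_signature dterm \<Rightarrow> nat list"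
  and term_cod :: "'b dterm \<Rightarrow> nat list" where
  "term_dom (EG g) = ndom g"
| "term_dom (EI xs) = xs"
| "term_dom (EC e1 e2) = term_dom e2"
| "term_dom (ET e1 e2) = term_dom e1 @ term_dom e2"
| "term_dom (EBL xs y) = xs @ [y]"
| "term_dom (EBR y xs) = y # xs"
| "term_dom (EIL xs y) = xs @ [y]"
| "term_dom (EIR y xs) = y # xs"
| "term_cod (EG g) = ncod g"
| "term_cod (EI xs) = xs"
| "term_cod (EC e1 e2) = term_cod e1"
| "term_cod (ET e1 e2) = term_cod e1 @ term_cod e2"
| "term_cod (EBL xs y) = y # xs"
| "term_cod (EBR y xs) = xs @ [y]"
| "term_cod (EIL xs y) = y # xs"
| "term_cod (EIR y xs) = xs @ [y]"

fun term_wt :: "'b::diagram_signature dterm \<Rightarrow> bool" where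
  "term_wt (EC e1 e2) = (term_wt e1 \<and> term_wt e2 \<and> term_cod e2 = term_dom e1)"
| "term_wt (ET e1 e2) = (term_wt e1 \<and> term_wt e2)"
| "term_wt _ = True"

fun layers_of :: "'b::diagram_signature dterm \<Rightarrow> 'b layer list" where
  "layers_of (EG g) = [(0,g)]"
| "layers_of (EI xs) = []"
| "layers_of (EC e1 e2) = layers_of e2 @ layers_of e1"
| "layers_of (ET e1 e2) = layers_of e1 @ shift (length (term_cod e1)) (layers_of e2)"
| "layers_of (EBL xs y) = brL xs y"
| "layers_of (EBR y xs) = brR y xs"
| "layers_of (EIL xs y) = biL xs y"
| "layers_of (EIR y xs) = biR y xs"

definition term_rule :: "'b::diagram_signature dterm \<Rightarrow> 'b dterm \<Rightarrow> 'b rule" where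
  "term_rule e1 e2 = (term_dom e1, layers_of e1, layers_of e2)"

definition natBL :: "'b::diagram_signature node \<Rightarrow> nat \<Rightarrow> 'b rule" where
  "natBL g y = (ndom g @ [y], (0,g) # brL (ncod g) y, brL (ndom g) y @ [(1,g)])"

definition natBR :: "nat \<Rightarrow> 'b::diagram_signature node \<Rightarrow> 'b rule" where
  "natBR y g = (y # ndom g, (1,g) # brR y (ncod g), brR y (ndom g) @ [(0,g)])"

definition natIL :: "'b::diagram_signature node \<Rightarrow> nat \<Rightarrow> 'b rule" where
  "natIL g y = (ndom g @ [y], (0,g) # biL (ncod g) y, biL (ndom g) y @ [(1,g)])"

definition natIR :: "nat \<Rightarrow> 'b::diagram_signature node \<Rightarrow> 'b rule" where
  "natIR y g = (y # ndom g, (1,g) # biR y (ncod g), biR y (ndom g) @ [(0,g)])"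

definition cancBI :: "nat \<Rightarrow> nat \<Rightarrow> 'b::diagram_signature rule" where
  "cancBI x y = ([x,y], [(0,BrdI x y),(0,Brd y x)], [])"

definition cancIB :: "nat \<Rightarrow> nat \<Rightarrow> 'b::diagram_signature rule" where
  "cancIB x y = ([y,x], [(0,Brd y x),(0,BrdI x y)], [])"

section \<open>Interpretation of string diagrams\<close>

fun tensor_obs :: "('o,'m) bcat \<Rightarrow> (nat \<Rightarrow> 'o) \<Rightarrow> nat list \<Rightarrow> 'o" where
  "tensor_obs C obj [] = Uob C"
| "tensor_obs C obj (x#xs) = Tob C (obj x) (tensor_obs C obj xs)"

locale diagram_model = braided_cat C for C :: "('o,'m) bcat" +
  fixes obj :: "nat \<Rightarrow> 'o" and box :: "'b::diagram_signature \<Rightarrow> 'm"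
  assumes box_hom: "hom C (box b) (tensor_obs C obj (box_dom b)) (tensor_obs C obj (box_cod b))"
begin

abbreviation ob where "ob \<equiv> tensor_obs C obj"

lemma ob_append [simp]: "ob (xs @ ys) = Tob C (ob xs) (ob ys)"
  by (induction xs) auto

fun node_sem :: "'b::diagram_signature node \<Rightarrow> 'm" where
  "node_sem (Box b) = box b"
| "node_sem (Brd x y) = Br C (obj x) (obj y)"
| "node_sem (BrdI x y) = Binv C (obj x) (obj y)"

lemma dom_node_sem [simp]: "Dom C (node_sem g) = ob (ndom g)"
  and cod_node_sem [simp]: "Cod C (node_sem g) = ob (ncod g)"
  using box_hom by (cases g; force simp: hom_def)+

definition layer_sem :: "nat \<Rightarrow> 'b::diagram_signature node \<Rightarrow> nat list \<Rightarrow> 'm" where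
  "layer_sem n g W = Tm C (Idm C (ob (take n W)))
      (Tm C (node_sem g) (Idm C (ob (drop (n + length (ndom g)) W))))"

fun diag_sem :: "nat list \<Rightarrow> 'b::diagram_signature layer list \<Rightarrow> 'm" where
  "diag_sem W [] = Idm C (ob W)"
| "diag_sem W ((n,g)#d) = Cmp C (diag_sem (after_node n g W) d) (layer_sem n g W)"

fun term_sem :: "'b::diagram_signature dterm \<Rightarrow> 'm" where
  "term_sem (EG g) = node_sem g" | "term_sem (EI xs) = Idm C (ob xs)"
| "term_sem (EC e1 e2) = Cmp C (term_sem e1) (term_sem e2)"
| "term_sem (ET e1 e2) = Tm C (term_sem e1) (term_sem e2)"
| "term_sem (EBL xs y) = Br C (ob xs) (obj y)" | "term_sem (EBR y xs) = Br C (obj y) (ob xs)"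
| "term_sem (EIL xs y) = Binv C (ob xs) (obj y)" | "term_sem (EIR y xs) = Binv C (obj y) (ob xs)"

definition valid_rule :: "'b::diagram_signature rule \<Rightarrow> bool" where
  "valid_rule R = (case R of (X,l,r) \<Rightarrow> well_typed X l \<and> well_typed X r \<and> out_wires X l
      = out_wires X r \<and> diag_sem X l = diag_sem X r)"

lemma fits_split: "fits n dg W \<Longrightarrow> take n W @ dg @ drop (n + length dg) W = W"
proof -
  assume a: "fits n dg W"
  have t: "take (length dg) (drop n W) = dg" using a by (simp add: fits_def)
  have e: "drop (length dg) (drop n W) = drop (n + length dg) W" by (simp add: add.commute)
  have "W = take n W @ drop n W" by (rule append_take_drop_id[symmetric])
  also have "drop n W = take (length dg) (drop n W) @ drop (length dg) (drop n W)"
    by (rule append_take_drop_id[symmetric])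
  finally show ?thesis unfolding t e by simp
qed

lemma layer_sem_dom: "fits n (ndom g) W \<Longrightarrow> Dom C (layer_sem n g W) = ob W"
proof -
  assume a: "fits n (ndom g) W"
  have "Dom C (layer_sem n g W) = ob (take n W @ ndom g @ drop (n + length (ndom g)) W)"
    by (simp add: layer_sem_def)
  also have "\<dots> = ob W" using fits_split[OF a] by simp
  finally show ?thesis .
qed

lemma layer_sem_cod: "Cod C (layer_sem n g W) = ob (after_node n g W)"
  by (simp add: layer_sem_def after_node_def)

lemma diag_sem_dom: "well_typed W d \<Longrightarrow> Dom C (diag_sem W d) = ob W"
  and diag_sem_cod: "well_typed W d \<Longrightarrow> Cod C (diag_sem W d) = ob (out_wires W d)"
proof (induction W d rule: well_typed.induct)
  case (2 W n g d)
  { case 1 then show ?case using 2 by (simp add: layer_sem_dom layer_sem_cod) }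
  { case 2 then show ?case using "2.IH" by (simp add: layer_sem_dom layer_sem_cod) }
qed simp_all

lemma well_typed_append[simp]: "well_typed W (d1 @ d2)
    = (well_typed W d1 \<and> well_typed (out_wires W d1) d2)"
  by (induction W d1 rule: well_typed.induct) auto
lemma out_wires_append[simp]: "out_wires W (d1 @ d2) = out_wires (out_wires W d1) d2"
  by (induction W d1 rule: out_wires.induct) auto

lemma diag_sem_append: "well_typed W (d1 @ d2) \<Longrightarrow> diag_sem W (d1 @ d2)
    = Cmp C (diag_sem (out_wires W d1) d2) (diag_sem W d1)"
proof (induction W d1 rule: well_typed.induct)
  case (1 W)
  then show ?case by (simp add: diag_sem_dom)
next
  case (2 W n g d)
  then have f: "fits n (ndom g) W" and w: "well_typed (after_node n g W) (d @ d2)" by auto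
  have "diag_sem W (((n,g)#d) @ d2)
      = Cmp C (diag_sem (after_node n g W) (d @ d2)) (layer_sem n g W)" by simp
  also have "\<dots> = Cmp C
      (Cmp C (diag_sem (out_wires (after_node n g W) d) d2) (diag_sem (after_node n g W) d))
      (layer_sem n g W)"
    using 2 w by simp
  also have "\<dots> = Cmp C (diag_sem (out_wires (after_node n g W) d) d2)
      (Cmp C (diag_sem (after_node n g W) d) (layer_sem n g W))"
    using w by (intro cmp_assoc') (auto simp: diag_sem_dom diag_sem_cod layer_sem_cod)
  finally show ?case by simp
qed

lemma fits_shift: "fits n dg X \<Longrightarrow> fits (n + length P) dg (P @ X @ Q)"
  unfolding fits_def by (simp add: add.commute)

lemma after_node_shift: "fits n (ndom g) X \<Longrightarrow> after_node (n + length P) g (P @ X @ Q)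
    = P @ after_node n g X @ Q"
  unfolding fits_def after_node_def by (simp add: add.commute add.left_commute)

lemma layer_sem_shift: "fits n (ndom g) X \<Longrightarrow>
   layer_sem (n + length P) g (P @ X @ Q)
       = Tm C (Idm C (ob P)) (Tm C (layer_sem n g X) (Idm C (ob Q)))"
  unfolding fits_def layer_sem_def by (simp add: add.commute add.left_commute idm_tob)

lemma shift_cons[simp]: "shift p ((n,g)#l) = (n+p,g) # shift p l" and shift_nil[simp]: "shift p []
    = []"
  by (simp_all add: shift_def)
lemma shift_append[simp]: "shift p (l1 @ l2) = shift p l1 @ shift p l2" by (simp add: shift_def)
lemma shift_0[simp]: "shift 0 l = l" by (induction l) (auto simp: shift_def)

lemma shift_sound: "well_typed X l \<Longrightarrow> well_typed (P @ X @ Q) (shift (length P) l) \<and>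
   out_wires (P @ X @ Q) (shift (length P) l) = P @ out_wires X l @ Q \<and>
   diag_sem (P @ X @ Q) (shift (length P) l)
       = Tm C (Idm C (ob P)) (Tm C (diag_sem X l) (Idm C (ob Q)))"
proof (induction X l rule: well_typed.induct)
  case (1 W)
  then show ?case by (simp add: idm_tob)
next
  case (2 X n g l)
  then have f: "fits n (ndom g) X" and w: "well_typed (after_node n g X) l" by auto
  note IH = "2.IH"[OF w]
  have a: "after_node (n + length P) g (P @ X @ Q) = P @ after_node n g X @ Q"
      using after_node_shift[OF f] .
  have "diag_sem (P @ X @ Q) (shift (length P) ((n,g)#l)) =
      Cmp C (Tm C (Idm C (ob P)) (Tm C (diag_sem (after_node n g X) l) (Idm C (ob Q))))
            (Tm C (Idm C (ob P)) (Tm C (layer_sem n g X) (Idm C (ob Q))))"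
    using IH a layer_sem_shift[OF f] by simp
  also have "\<dots> = Tm C (Idm C (ob P))
      (Tm C (Cmp C (diag_sem (after_node n g X) l) (layer_sem n g X)) (Idm C (ob Q)))"
    using w by (simp add: interchange' diag_sem_dom layer_sem_cod)
  finally show ?case using IH a fits_shift[OF f] f by simp
qed

lemma extend_right_sound:
  "well_typed X l \<Longrightarrow> well_typed (X @ Q) l \<and> out_wires (X @ Q) l = out_wires X l @ Q
    \<and> diag_sem (X @ Q) l = Tm C (diag_sem X l) (Idm C (ob Q))"
  using shift_sound[of X l "[]" Q] by simp

lemma commute_canonical_1:
  assumes "ndom g1 = d1" "ndom g2 = d2"
  shows "well_typed (P @ d1 @ Z @ d2 @ Q) [(length P + length d1 + length Z, g2), (length P, g1)]
    \<and> out_wires (P @ d1 @ Z @ d2 @ Q) [(length P + length d1 + length Z, g2), (length P, g1)]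
     = out_wires (P @ d1 @ Z @ d2 @ Q)
         [(length P, g1), (length P + length (ncod g1) + length Z, g2)]
    \<and> diag_sem (P @ d1 @ Z @ d2 @ Q) [(length P + length d1 + length Z, g2), (length P, g1)]
     = diag_sem (P @ d1 @ Z @ d2 @ Q)
         [(length P, g1), (length P + length (ncod g1) + length Z, g2)]"
  using assms by (simp add: layer_sem_def after_node_def fits_def interchange' add.assoc idm_tob)

lemma commute_canonical_2:
  assumes "ndom g1 = d1" "ndom g2 = d2"
  shows "well_typed (P @ d1 @ Z @ d2 @ Q)
      [(length P, g1), (length P + length (ncod g1) + length Z, g2)]
    \<and> out_wires (P @ d1 @ Z @ d2 @ Q) [(length P, g1), (length P + length (ncod g1) + length Z, g2)]
     = out_wires (P @ d1 @ Z @ d2 @ Q) [(length P + length d1 + length Z, g2), (length P, g1)]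
    \<and> diag_sem (P @ d1 @ Z @ d2 @ Q) [(length P, g1), (length P + length (ncod g1) + length Z, g2)]
     = diag_sem (P @ d1 @ Z @ d2 @ Q) [(length P + length d1 + length Z, g2), (length P, g1)]"
  using assms by (simp add: layer_sem_def after_node_def fits_def interchange' add.assoc idm_tob)

lemma fits_disjoint_right:
  assumes "fits n1 d1 W" "fits n2 d2 (take n1 W @ c1 @ drop (n1 + length d1) W)" "n1 + length c1 \<le>
      n2"
  obtains P Z Q where "W = P @ d1 @ Z @ d2 @ Q" "length P = n1" "n2 = n1 + length c1 + length Z"
proof -
  define P where "P = take n1 W"
  define R where "R = drop (n1 + length d1) W"
  have W: "W = P @ d1 @ R" using fits_split[OF assms(1)] by (simp add: P_def R_def)
  have lP: "length P = n1" using assms(1) by (simp add: P_def fits_def)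
  define z where "z = n2 - n1 - length c1"
  have f2: "fits n2 d2 (P @ c1 @ R)" using assms(2) by (simp add: P_def R_def)
  have n2: "n2 = length P + length c1 + z" using assms(3) lP by (simp add: z_def)
  have fR: "fits z d2 R" using f2 unfolding n2 fits_def by (simp add: add.assoc)
  define Z where "Z = take z R"
  define Q where "Q = drop (z + length d2) R"
  have R: "R = Z @ d2 @ Q" using fits_split[OF fR] by (simp add: Z_def Q_def)
  have lZ: "length Z = z" using fR by (simp add: Z_def fits_def)
  show ?thesis by (rule that[of P Z Q]) (use W R lP lZ n2 in auto)
qed

lemma fits_disjoint_left:
  assumes "fits n1 d1 W" "fits n2 d2 (take n1 W @ c1 @ drop (n1 + length d1) W)" "n2 + length d2 \<le>
      n1"
  obtains P Z Q where "W = P @ d2 @ Z @ d1 @ Q" "length P = n2" "n1 = n2 + length d2 + length Z"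
proof -
  define P where "P = take n1 W"
  have L: "length P = n1" using assms(1) by (simp add: P_def fits_def)
  have "take (length d2) (drop n2 (P @ c1 @ drop (n1 + length d1) W))
      = take (length d2) (drop n2 P)"
    using L assms(3) by simp
  also have "\<dots> = take (length d2) (drop n2 W)"
    using assms(3) by (simp add: P_def drop_take take_take min_def)
  finally have "take (length d2) (drop n2 (take n1 W @ c1 @ drop (n1 + length d1) W))
      = take (length d2) (drop n2 W)" by (simp add: P_def)
  then have f2: "fits n2 d2 W" using assms(2,3) L unfolding fits_def P_def by simp
  then have "fits n1 d1 (take n2 W @ d2 @ drop (n2 + length d2) W)"
    using assms(1) by (simp add: fits_split)
  from fits_disjoint_right[OF f2 this] assms(3) show ?thesis
    by (metis that)
qed

lemma swap_sound_right:
  assumes le: "n1 + length (ncod g1) \<le> n2" and w: "well_typed W [(n1,g1), (n2,g2)]"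
  defines "d' \<equiv> [(n2 + length (ndom g1) - length (ncod g1), g2), (n1,g1)]"
  shows "well_typed W d' \<and> out_wires W d' = out_wires W [(n1,g1), (n2,g2)]
    \<and> diag_sem W d' = diag_sem W [(n1,g1), (n2,g2)]"
proof -
  have f1: "fits n1 (ndom g1) W"
    and f2: "fits n2 (ndom g2) (take n1 W @ ncod g1 @ drop (n1 + length (ndom g1)) W)"
    using w by (auto simp: after_node_def)
  obtain P Z Q where W: "W = P @ ndom g1 @ Z @ ndom g2 @ Q" and lP: "length P = n1"
    and n2: "n2 = n1 + length (ncod g1) + length Z"
    by (rule fits_disjoint_right[OF f1 f2 le])
  have e1: "[(n1,g1), (n2,g2)] = [(length P, g1), (length P + length (ncod g1) + length Z, g2)]"
    using lP n2 by simp
  have e2: "d' = [(length P + length (ndom g1) + length Z, g2), (length P, g1)]"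
    using lP n2 by (simp add: d'_def)
  show ?thesis unfolding e1 e2 W by (rule commute_canonical_1) auto
qed

lemma swap_sound_left:
  assumes le: "n2 + length (ndom g2) \<le> n1" and w: "well_typed W [(n1,g1), (n2,g2)]"
  defines "d' \<equiv> [(n2,g2), (n1 + length (ncod g2) - length (ndom g2), g1)]"
  shows "well_typed W d' \<and> out_wires W d' = out_wires W [(n1,g1), (n2,g2)]
    \<and> diag_sem W d' = diag_sem W [(n1,g1), (n2,g2)]"
proof -
  have f1: "fits n1 (ndom g1) W" and f2: "fits n2 (ndom g2) (after_node n1 g1 W)"
    using w by auto
  obtain P Z Q where W: "W = P @ ndom g2 @ Z @ ndom g1 @ Q" and lP: "length P = n2"
    and n1: "n1 = n2 + length (ndom g2) + length Z"
    using f2 unfolding after_node_def by (rule fits_disjoint_left[OF f1 _ le])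
  have e1: "[(n1,g1), (n2,g2)] = [(length P + length (ndom g2) + length Z, g1), (length P, g2)]"
    using lP n1 by simp
  have e2: "d' = [(length P, g2), (length P + length (ncod g2) + length Z, g1)]"
    using lP n1 by (simp add: d'_def)
  show ?thesis unfolding e1 e2 W by (rule commute_canonical_2) auto
qed

lemma swap_sound:
  assumes "commute_pair a b = Some (b', a')" and "well_typed W [a,b]"
  shows "well_typed W [b',a'] \<and> out_wires W [b',a'] = out_wires W [a,b]
    \<and> diag_sem W [b',a'] = diag_sem W [a,b]"
proof -
  obtain n1 g1 n2 g2 where ab: "a = (n1,g1)" "b = (n2,g2)" by fastforce
  show ?thesis
    using assms swap_sound_right[of n1 g1 n2 W g2] swap_sound_left[of n2 g2 n1 W g1]
    by (auto simp: ab split: if_splits)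
qed

lemma swap_at_sound: "swap_at i d = Some d' \<Longrightarrow> well_typed W d \<Longrightarrow>
    well_typed W d' \<and> out_wires W d' = out_wires W d \<and> diag_sem W d' = diag_sem W d"
proof (induction i d arbitrary: W d' rule: swap_at.induct)
  case (1 a b d)
  then obtain a' b' where s: "commute_pair a b = Some (b',a')" and d': "d' = b' # a' # d"
    by (auto split: option.splits)
  have w: "well_typed W ([a,b] @ d)" using 1 by simp
  note ss = swap_sound[OF s, of W]
  have w1: "well_typed W [a,b]" using w unfolding well_typed_append by blast
  have e1: "out_wires W [b',a'] = out_wires W [a,b]" and e2: "diag_sem W [b',a']
      = diag_sem W [a,b]" and w3: "well_typed W [b',a']"
    using ss w1 by auto
  have w2: "well_typed W ([b',a'] @ d)" using w unfolding well_typed_append e1 using w3 by blast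
  have "diag_sem W ([b',a'] @ d) = diag_sem W ([a,b] @ d)"
    unfolding diag_sem_append[OF w] diag_sem_append[OF w2] e1 e2 ..
  moreover have "out_wires W ([b',a'] @ d) = out_wires W ([a,b] @ d)"
      unfolding out_wires_append e1 ..
  ultimately show ?case using d' w2 by simp
next
  case (2 i a d)
  then obtain e where e: "swap_at i d = Some e" and d': "d' = a # e" by auto
  obtain n g where a: "a = (n,g)" by (cases a)
  have "well_typed (after_node n g W) d" using 2 a by simp
  then show ?case using "2.IH"[OF e] 2 a d' by simp
qed auto

lemma rewrite_at_sound: "rewrite_at i p R W d = Some d' \<Longrightarrow> valid_rule R \<Longrightarrow> well_typed W d \<Longrightarrow>
    well_typed W d' \<and> out_wires W d' = out_wires W d \<and> diag_sem W d' = diag_sem W d"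
proof (induction i p R W d arbitrary: d' rule: rewrite_at.induct)
  case (1 p X l r W d)
  then have f: "fits p X W" and t: "take (length l) d = shift p l"
    and d': "d' = shift p r @ drop (length l) d" by (auto split: if_splits)
  have v: "well_typed X l" "well_typed X r" "out_wires X l = out_wires X r" "diag_sem X l
      = diag_sem X r"
    using 1 by (auto simp: valid_rule_def)
  define P where "P = take p W"
  define Q where "Q = drop (p + length X) W"
  have W: "W = P @ X @ Q" using fits_split[OF f] by (simp add: P_def Q_def)
  have lP: "length P = p" using f by (simp add: P_def fits_def)
  have d: "d = shift p l @ drop (length l) d" using t by (metis append_take_drop_id)
  note sl = shift_sound[OF v(1), of P Q] and sr = shift_sound[OF v(2), of P Q]
  have wd: "well_typed W (shift p l @ drop (length l) d)" using 1 d by simp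
  have wd': "well_typed W (shift p r @ drop (length l) d)"
    using wd sl sr v unfolding W lP[symmetric] by simp
  have "diag_sem W (shift p r @ drop (length l) d) = diag_sem W (shift p l @ drop (length l) d)"
    using diag_sem_append[OF wd] diag_sem_append[OF wd'] sl sr v unfolding W lP[symmetric] by simp
  then show ?case using d' wd' wd d sl sr v unfolding W lP[symmetric] by (metis out_wires_append)
next
  case (2 i p R W a d)
  then obtain e where e: "rewrite_at i p R (after_node (fst a) (snd a) W) d = Some e" and d': "d'
      = a # e" by auto
  obtain n g where a: "a = (n,g)" by (cases a)
  have "well_typed (after_node n g W) d" using 2 a by simp
  then show ?case using "2.IH"[OF e] 2 a d' by simp
qed auto

lemma valid_flip_rule: "valid_rule R \<Longrightarrow> valid_rule (flip_rule R)"
  by (cases R) (auto simp: valid_rule_def)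

lemma run_sound: "run W ops d = Some d' \<Longrightarrow> list_all valid_rule (op_rules ops) \<Longrightarrow> well_typed W d \<Longrightarrow>
    well_typed W d' \<and> out_wires W d' = out_wires W d \<and> diag_sem W d' = diag_sem W d"
proof (induction W ops d rule: run.induct)
  case (1 W d)
  then show ?case by simp
next
  case (2 W i os d)
  then obtain e where e: "swap_at i d = Some e" and r: "run W os e = Some d'"
      by (auto split: option.splits)
  show ?case using swap_at_sound[OF e] "2.IH"[OF e r] 2 by simp
next
  case (3 W i p R os d)
  then obtain e where e: "rewrite_at i p R W d = Some e" and r: "run W os e = Some d'"
      by (auto split: option.splits)
  show ?case using rewrite_at_sound[OF e] "3.IH"[OF e r] 3 by simp
next
  case (4 W i p R os d)
  then obtain e where e: "rewrite_at i p (flip_rule R) W d = Some e" and r: "run W os e = Some d'"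
      by (auto split: option.splits)
  show ?case using rewrite_at_sound[OF e] valid_flip_rule "4.IH"[OF e r] 4 by simp
qed

lemma brL_sem:
  "well_typed (xs @ [y]) (brL xs y :: 'b layer list)
      \<and> out_wires (xs @ [y]) (brL xs y :: 'b layer list) = y # xs
    \<and> diag_sem (xs @ [y]) (brL xs y) = Br C (ob xs) (obj y)"
proof (induction xs)
  case Nil
  then show ?case by (simp add: br_unit_left)
next
  case (Cons x xs)
  note s = shift_sound[of "xs @ [y]" "brL xs y :: 'b layer list" "[x]" "[]", simplified,
      OF Cons[THEN conjunct1]]
  have w: "well_typed (x # xs @ [y]) (shift 1 (brL xs y) @ [(0, Brd x y)] :: 'b layer list)"
    using s Cons by (simp add: fits_def after_node_def)
  have "diag_sem (x # xs @ [y]) (shift 1 (brL xs y) @ [(0, Brd x y)] :: 'b layer list) =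
     Cmp C (Tm C (Br C (obj x) (obj y)) (Idm C (ob xs)))
         (Tm C (Idm C (obj x)) (Br C (ob xs) (obj y)))"
    using diag_sem_append[OF w] s Cons by (simp add: layer_sem_def after_node_def)
  also have "\<dots> = Br C (ob (x # xs)) (obj y)" by (simp add: br_hexagon_left)
  finally show ?case using w s Cons by (simp add: after_node_def)
qed

lemma brR_sem:
  "well_typed (y # xs) (brR y xs :: 'b layer list) \<and> out_wires (y # xs) (brR y xs :: 'b layer list)
      = xs @ [y]
    \<and> diag_sem (y # xs) (brR y xs) = Br C (obj y) (ob xs)"
proof (induction xs)
  case Nil
  then show ?case by (simp add: br_unit_right)
next
  case (Cons x xs)
  note s = shift_sound[of "y # xs" "brR y xs :: 'b layer list" "[x]" "[]", simplified,
      OF Cons[THEN conjunct1]]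
  have "diag_sem (y # x # xs) (brR y (x # xs)) =
     Cmp C (Tm C (Idm C (obj x)) (Br C (obj y) (ob xs)))
         (Tm C (Br C (obj y) (obj x)) (Idm C (ob xs)))"
    using s Cons by (simp add: layer_sem_def after_node_def)
  also have "\<dots> = Br C (obj y) (ob (x # xs))" by (simp add: br_hexagon_right)
  finally show ?case using s Cons by (simp add: after_node_def fits_def)
qed

lemma biL_sem:
  "well_typed (xs @ [y]) (biL xs y :: 'b layer list)
      \<and> out_wires (xs @ [y]) (biL xs y :: 'b layer list) = y # xs
    \<and> diag_sem (xs @ [y]) (biL xs y) = Binv C (ob xs) (obj y)"
proof (induction xs)
  case Nil
  then show ?case by (simp add: Binv_def br_unit_right inv_id)
next
  case (Cons x xs)
  note s = shift_sound[of "xs @ [y]" "biL xs y :: 'b layer list" "[x]" "[]", simplified,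
      OF Cons[THEN conjunct1]]
  have w: "well_typed (x # xs @ [y]) (shift 1 (biL xs y) @ [(0, BrdI x y)] :: 'b layer list)"
    using s Cons by (simp add: fits_def after_node_def)
  have "diag_sem (x # xs @ [y]) (shift 1 (biL xs y) @ [(0, BrdI x y)] :: 'b layer list) =
     Cmp C (Tm C (Binv C (obj x) (obj y)) (Idm C (ob xs)))
         (Tm C (Idm C (obj x)) (Binv C (ob xs) (obj y)))"
    using diag_sem_append[OF w] s Cons by (simp add: layer_sem_def after_node_def)
  also have "\<dots> = Binv C (ob (x # xs)) (obj y)" by (simp add: binv_hexagon_left)
  finally show ?case using w s Cons by (simp add: after_node_def)
qed

lemma biR_sem:
  "well_typed (y # xs) (biR y xs :: 'b layer list) \<and> out_wires (y # xs) (biR y xs :: 'b layer list)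
      = xs @ [y]
    \<and> diag_sem (y # xs) (biR y xs) = Binv C (obj y) (ob xs)"
proof (induction xs)
  case Nil
  then show ?case by (simp add: Binv_def br_unit_left inv_id)
next
  case (Cons x xs)
  note s = shift_sound[of "y # xs" "biR y xs :: 'b layer list" "[x]" "[]", simplified,
      OF Cons[THEN conjunct1]]
  have "diag_sem (y # x # xs) (biR y (x # xs)) =
     Cmp C (Tm C (Idm C (obj x)) (Binv C (obj y) (ob xs)))
         (Tm C (Binv C (obj y) (obj x)) (Idm C (ob xs)))"
    using s Cons by (simp add: layer_sem_def after_node_def)
  also have "\<dots> = Binv C (obj y) (ob (x # xs))" by (simp add: binv_hexagon_right)
  finally show ?case using s Cons by (simp add: after_node_def fits_def)
qed

lemma layers_of_sound:
  "term_wt e \<Longrightarrow> well_typed (term_dom e) (layers_of e)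
    \<and> out_wires (term_dom e) (layers_of e) = term_cod e
    \<and> diag_sem (term_dom e) (layers_of e) = term_sem e"
proof (induction e)
  case (EG g)
  then show ?case by (simp add: fits_def after_node_def layer_sem_def)
next
  case (EI xs)
  then show ?case by simp
next
  case (EC e1 e2)
  then have w: "well_typed (term_dom e2) (layers_of e2 @ layers_of e1)" by simp
  show ?case using EC diag_sem_append[OF w] by simp
next
  case (ET e1 e2)
  then have i1: "well_typed (term_dom e1) (layers_of e1)" "out_wires (term_dom e1) (layers_of e1)
      = term_cod e1" "diag_sem (term_dom e1) (layers_of e1) = term_sem e1"
    and i2: "well_typed (term_dom e2) (layers_of e2)" "out_wires (term_dom e2) (layers_of e2)
        = term_cod e2" "diag_sem (term_dom e2) (layers_of e2) = term_sem e2"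
    by auto
  note s1 = extend_right_sound[OF i1(1), of "term_dom e2"]
  note s2 = shift_sound[OF i2(1), of "term_cod e1" "[]"]
  have w: "well_typed (term_dom e1 @ term_dom e2)
      (layers_of e1 @ shift (length (term_cod e1)) (layers_of e2))"
    using s1 s2 i1 by simp
  have "diag_sem (term_dom e1 @ term_dom e2)
      (layers_of e1 @ shift (length (term_cod e1)) (layers_of e2))
     = Cmp C (Tm C (Idm C (ob (term_cod e1))) (term_sem e2))
         (Tm C (term_sem e1) (Idm C (ob (term_dom e2))))"
    using diag_sem_append[OF w] s1 s2 i1 i2 by simp
  also have "\<dots> = Tm C (term_sem e1) (term_sem e2)"
    using i1 i2 by (simp add: interchange' diag_sem_dom diag_sem_cod flip: i1(3) i2(3))
  finally show ?case using s1 s2 i1 i2 by simp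
qed (use brL_sem brR_sem biL_sem biR_sem in auto)

lemma valid_term_rule:
  "term_wt e1 \<Longrightarrow> term_wt e2 \<Longrightarrow> term_dom e1 = term_dom e2 \<Longrightarrow> term_cod e1 = term_cod e2 \<Longrightarrow>
    term_sem e1 = term_sem e2 \<Longrightarrow> valid_rule (term_rule e1 e2)"
  using layers_of_sound[of e1] layers_of_sound[of e2] by (simp add: term_rule_def valid_rule_def)

lemma valid_run: "list_all valid_rule (op_rules ops) \<Longrightarrow> well_typed X l \<Longrightarrow> run X ops l = Some r \<Longrightarrow>
    valid_rule (X, l, r)"
  using run_sound[of X ops l r] by (auto simp: valid_rule_def)

lemma term_rule_sound: "valid_rule (term_rule e1 e2) \<Longrightarrow> term_wt e1 \<Longrightarrow> term_wt e2 \<Longrightarrow>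
    term_dom e1 = term_dom e2 \<Longrightarrow> term_sem e1 = term_sem e2"
  using layers_of_sound[of e1] layers_of_sound[of e2] by (simp add: term_rule_def valid_rule_def)

lemma valid_natBL: "valid_rule (natBL g y)"
proof -
  let ?X = "ndom g @ [y]"
  note bc = brL_sem[of "ncod g" y] and bd = brL_sem[of "ndom g" y]
  have a0: "after_node 0 g ?X = ncod g @ [y]" by (simp add: after_node_def)
  have f0: "fits 0 (ndom g) ?X" by (simp add: fits_def)
  have f1: "fits 1 (ndom g) (y # ndom g)" by (simp add: fits_def)
  have a1: "after_node 1 g (y # ndom g) = y # ncod g" by (simp add: after_node_def)
  have wl: "well_typed ?X ((0,g) # brL (ncod g) y)" using f0 a0 bc by simp
  have wr: "well_typed ?X (brL (ndom g) y @ [(1,g)])" using bd f1 by simp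
  have sl: "diag_sem ?X ((0,g) # brL (ncod g) y)
      = Cmp C (Br C (ob (ncod g)) (obj y)) (Tm C (node_sem g) (Idm C (obj y)))"
    using bc a0 by (simp add: layer_sem_def)
  have sr: "diag_sem ?X (brL (ndom g) y @ [(1,g)])
      = Cmp C (Tm C (Idm C (obj y)) (node_sem g)) (Br C (ob (ndom g)) (obj y))"
    using diag_sem_append[OF wr] bd f1 by (simp add: layer_sem_def after_node_def)
  have "Cmp C (Br C (ob (ncod g)) (obj y)) (Tm C (node_sem g) (Idm C (obj y)))
      = Cmp C (Tm C (Idm C (obj y)) (node_sem g)) (Br C (ob (ndom g)) (obj y))"
    using br_natural[of "node_sem g" "Idm C (obj y)"] by simp
  then show ?thesis unfolding natBL_def valid_rule_def using wl wr sl sr bc bd a0 a1 by simp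
qed

lemma valid_natBR: "valid_rule (natBR y g)"
proof -
  let ?X = "y # ndom g"
  note bc = brR_sem[of y "ncod g"] and bd = brR_sem[of y "ndom g"]
  have a0: "after_node 1 g ?X = y # ncod g" by (simp add: after_node_def)
  have f0: "fits 1 (ndom g) ?X" by (simp add: fits_def)
  have f1: "fits 0 (ndom g) (ndom g @ [y])" by (simp add: fits_def)
  have a1: "after_node 0 g (ndom g @ [y]) = ncod g @ [y]" by (simp add: after_node_def)
  have wl: "well_typed ?X ((1,g) # brR y (ncod g))" using f0 a0 bc by simp
  have wr: "well_typed ?X (brR y (ndom g) @ [(0,g)])" using bd f1 by simp
  have sl: "diag_sem ?X ((1,g) # brR y (ncod g))
      = Cmp C (Br C (obj y) (ob (ncod g))) (Tm C (Idm C (obj y)) (node_sem g))"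
    using bc a0 by (simp add: layer_sem_def)
  have sr: "diag_sem ?X (brR y (ndom g) @ [(0,g)])
      = Cmp C (Tm C (node_sem g) (Idm C (obj y))) (Br C (obj y) (ob (ndom g)))"
    using diag_sem_append[OF wr] bd f1 by (simp add: layer_sem_def after_node_def)
  have "Cmp C (Br C (obj y) (ob (ncod g))) (Tm C (Idm C (obj y)) (node_sem g))
      = Cmp C (Tm C (node_sem g) (Idm C (obj y))) (Br C (obj y) (ob (ndom g)))"
    using br_natural[of "Idm C (obj y)" "node_sem g"] by simp
  then show ?thesis unfolding natBR_def valid_rule_def using wl wr sl sr bc bd a0 a1 by simp
qed

lemma valid_natIL: "valid_rule (natIL g y)"
proof -
  let ?X = "ndom g @ [y]"
  note bc = biL_sem[of "ncod g" y] and bd = biL_sem[of "ndom g" y]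
  have a0: "after_node 0 g ?X = ncod g @ [y]" by (simp add: after_node_def)
  have f0: "fits 0 (ndom g) ?X" by (simp add: fits_def)
  have f1: "fits 1 (ndom g) (y # ndom g)" by (simp add: fits_def)
  have a1: "after_node 1 g (y # ndom g) = y # ncod g" by (simp add: after_node_def)
  have wl: "well_typed ?X ((0,g) # biL (ncod g) y)" using f0 a0 bc by simp
  have wr: "well_typed ?X (biL (ndom g) y @ [(1,g)])" using bd f1 by simp
  have sl: "diag_sem ?X ((0,g) # biL (ncod g) y)
      = Cmp C (Binv C (ob (ncod g)) (obj y)) (Tm C (node_sem g) (Idm C (obj y)))"
    using bc a0 by (simp add: layer_sem_def)
  have sr: "diag_sem ?X (biL (ndom g) y @ [(1,g)])
      = Cmp C (Tm C (Idm C (obj y)) (node_sem g)) (Binv C (ob (ndom g)) (obj y))"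
    using diag_sem_append[OF wr] bd f1 by (simp add: layer_sem_def after_node_def)
  have "Cmp C (Tm C (Idm C (obj y)) (node_sem g)) (inv C (Br C (obj y) (ob (ndom g))))
      = Cmp C (inv C (Br C (obj y) (ob (ncod g)))) (Tm C (node_sem g) (Idm C (obj y)))"
    by (rule inv_naturality[OF br_iso br_iso])
        (use br_natural[of "Idm C (obj y)" "node_sem g"] in simp_all)
  then show ?thesis unfolding natIL_def valid_rule_def using wl wr sl sr bc bd a0 a1
      by (simp add: Binv_def)
qed

lemma valid_natIR: "valid_rule (natIR y g)"
proof -
  let ?X = "y # ndom g"
  note bc = biR_sem[of y "ncod g"] and bd = biR_sem[of y "ndom g"]
  have a0: "after_node 1 g ?X = y # ncod g" by (simp add: after_node_def)
  have f0: "fits 1 (ndom g) ?X" by (simp add: fits_def)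
  have f1: "fits 0 (ndom g) (ndom g @ [y])" by (simp add: fits_def)
  have a1: "after_node 0 g (ndom g @ [y]) = ncod g @ [y]" by (simp add: after_node_def)
  have wl: "well_typed ?X ((1,g) # biR y (ncod g))" using f0 a0 bc by simp
  have wr: "well_typed ?X (biR y (ndom g) @ [(0,g)])" using bd f1 by simp
  have sl: "diag_sem ?X ((1,g) # biR y (ncod g))
      = Cmp C (Binv C (obj y) (ob (ncod g))) (Tm C (Idm C (obj y)) (node_sem g))"
    using bc a0 by (simp add: layer_sem_def)
  have sr: "diag_sem ?X (biR y (ndom g) @ [(0,g)])
      = Cmp C (Tm C (node_sem g) (Idm C (obj y))) (Binv C (obj y) (ob (ndom g)))"
    using diag_sem_append[OF wr] bd f1 by (simp add: layer_sem_def after_node_def)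
  have "Cmp C (Tm C (node_sem g) (Idm C (obj y))) (inv C (Br C (ob (ndom g)) (obj y)))
      = Cmp C (inv C (Br C (ob (ncod g)) (obj y))) (Tm C (Idm C (obj y)) (node_sem g))"
    by (rule inv_naturality[OF br_iso br_iso])
        (use br_natural[of "node_sem g" "Idm C (obj y)"] in simp_all)
  then show ?thesis unfolding natIR_def valid_rule_def using wl wr sl sr bc bd a0 a1
      by (simp add: Binv_def)
qed

lemma valid_cancBI: "valid_rule (cancBI x y)"
  using cmp_inv_self[OF br_iso[of "obj y" "obj x"]]
  by (simp add: cancBI_def valid_rule_def fits_def after_node_def layer_sem_def Binv_def)

lemma valid_cancIB: "valid_rule (cancIB x y)"
  using inv_cmp_self[OF br_iso[of "obj y" "obj x"]]
  by (simp add: cancIB_def valid_rule_def fits_def after_node_def layer_sem_def Binv_def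
      dom_inv[OF br_iso] cod_inv[OF br_iso])

end

section \<open>Hopf algebras and the Yetter-Drinfeld module R(A)\<close>

datatype hopf_box = Mul | Unit | Comul | Counit | Antipode | Act | ActR

instantiation hopf_box :: diagram_signature
begin

fun box_dom_hopf_box :: "hopf_box \<Rightarrow> nat list" where
  "box_dom_hopf_box Mul = [0,0]" | "box_dom_hopf_box Unit = []"
| "box_dom_hopf_box Comul = [0]" | "box_dom_hopf_box Counit = [0]"
| "box_dom_hopf_box Antipode = [0]" | "box_dom_hopf_box Act = [0,1]"
| "box_dom_hopf_box ActR = [0,0,1]"

fun box_cod_hopf_box :: "hopf_box \<Rightarrow> nat list" where
  "box_cod_hopf_box Mul = [0]" | "box_cod_hopf_box Unit = [0]"
| "box_cod_hopf_box Comul = [0,0]" | "box_cod_hopf_box Counit = []"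
| "box_cod_hopf_box Antipode = [0]" | "box_cod_hopf_box Act = [1]"
| "box_cod_hopf_box ActR = [0,1]"

instance ..

end

locale hopf_act_data = braided_cat C for C :: "('o,'m) bcat" +
  fixes H A :: 'o and m u \<Delta> \<epsilon> S aA :: 'm
  assumes hopf: "hopf_algebra C H m u \<Delta> \<epsilon> S"
    and act_hom: "hom C aA (Tob C H A) A"
begin

lemma hopf_axioms:
    "hom C m (Tob C H H) H" "hom C u (Uob C) H" "hom C \<Delta> H (Tob C H H)" "hom C \<epsilon> H (Uob C)"
    "hom C S H H"
    "Cmp C m (Tm C m (Idm C H)) = Cmp C m (Tm C (Idm C H) m)"
    "Cmp C m (Tm C u (Idm C H)) = Idm C H" "Cmp C m (Tm C (Idm C H) u) = Idm C H"
    "Cmp C (Tm C \<Delta> (Idm C H)) \<Delta> = Cmp C (Tm C (Idm C H) \<Delta>) \<Delta>"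
    "Cmp C (Tm C \<epsilon> (Idm C H)) \<Delta> = Idm C H" "Cmp C (Tm C (Idm C H) \<epsilon>) \<Delta> = Idm C H"
    "Cmp C \<Delta> m = Cmp C (Tm C m m) (Cmp C (Tm C (Tm C (Idm C H) (Br C H H)) (Idm C H)) (Tm C \<Delta> \<Delta>))"
    "Cmp C \<Delta> u = Tm C u u" "Cmp C \<epsilon> m = Tm C \<epsilon> \<epsilon>" "Cmp C \<epsilon> u = Idm C (Uob C)"
    "Cmp C m (Cmp C (Tm C S (Idm C H)) \<Delta>) = Cmp C u \<epsilon>"
    "Cmp C m (Cmp C (Tm C (Idm C H) S) \<Delta>) = Cmp C u \<epsilon>"
  using hopf unfolding hopf_algebra_def Let_def by simp_all

lemma structure_types [simp]:
  "Dom C m = Tob C H H" "Cod C m = H" "Dom C u = Uob C" "Cod C u = H"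
  "Dom C \<Delta> = H" "Cod C \<Delta> = Tob C H H" "Dom C \<epsilon> = H" "Cod C \<epsilon> = Uob C"
  "Dom C S = H" "Cod C S = H" "Dom C aA = Tob C H A" "Cod C aA = A"
  using hopf_axioms(1-5) act_hom by (auto simp: hom_def)

fun wire_obj :: "nat \<Rightarrow> 'o" where
  "wire_obj 0 = H" | "wire_obj (Suc n) = A"

fun hopf_sem :: "hopf_box \<Rightarrow> 'm" where
  "hopf_sem Mul = m" | "hopf_sem Unit = u" | "hopf_sem Comul = \<Delta>" | "hopf_sem Counit = \<epsilon>"
| "hopf_sem Antipode = S" | "hopf_sem Act = aA" | "hopf_sem ActR = R_act C H m \<Delta> S A aA"

lemma hopf_sem_hom: "hom C (hopf_sem b) (tensor_obs C wire_obj (box_dom b))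
    (tensor_obs C wire_obj (box_cod b))"
  by (cases b) (simp_all add: hom_def R_act_def Let_def)

end

locale hopf_module_diagrams = hopf_act_data +
  assumes module: "hmodule C H m u A aA"
begin

lemma act_axioms: "Cmp C aA (Tm C m (Idm C A)) = Cmp C aA (Tm C (Idm C H) aA)"
    "Cmp C aA (Tm C u (Idm C A)) = Idm C A"
  using module unfolding hmodule_def by simp_all

end

sublocale hopf_module_diagrams \<subseteq> diagram_model C wire_obj hopf_sem
  by unfold_locales (rule hopf_sem_hom)

definition "r_mul_assoc =
  term_rule
    (EC (EG (Box Mul)) (ET (EG (Box Mul)) (EI [0])))
    (EC (EG (Box Mul)) (ET (EI [0]) (EG (Box Mul))))"

definition "r_mul_unit_left = term_rule (EC (EG (Box Mul)) (ET (EG (Box Unit)) (EI [0]))) (EI [0])"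

definition "r_mul_unit_right = term_rule (EC (EG (Box Mul)) (ET (EI [0]) (EG (Box Unit)))) (EI [0])"

definition "r_comul_coassoc =
  term_rule
    (EC (ET (EG (Box Comul)) (EI [0])) (EG (Box Comul)))
    (EC (ET (EI [0]) (EG (Box Comul))) (EG (Box Comul)))"

definition "r_counit_left =
  term_rule
    (EC (ET (EG (Box Counit)) (EI [0])) (EG (Box Comul)))
    (EI [0])"

definition "r_counit_right =
  term_rule
    (EC (ET (EI [0]) (EG (Box Counit))) (EG (Box Comul)))
    (EI [0])"

definition "r_bialgebra =
  term_rule
    (EC (EG (Box Comul)) (EG (Box Mul)))
    (EC (ET (EG (Box Mul)) (EG (Box Mul)))
      (EC (ET (EI [0]) (ET (EG (Brd 0 0)) (EI [0]))) (ET (EG (Box Comul)) (EG (Box Comul)))))"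

definition "r_comul_unit =
  term_rule
    (EC (EG (Box Comul)) (EG (Box Unit)))
    (ET (EG (Box Unit)) (EG (Box Unit)))"

definition "r_counit_mul =
  term_rule
    (EC (EG (Box Counit)) (EG (Box Mul)))
    (ET (EG (Box Counit)) (EG (Box Counit)))"

definition "r_counit_unit = term_rule (EC (EG (Box Counit)) (EG (Box Unit))) (EI [])"

definition "r_antipode_left =
  term_rule
    (EC (EG (Box Mul)) (EC (ET (EG (Box Antipode)) (EI [0])) (EG (Box Comul))))
    (EC (EG (Box Unit)) (EG (Box Counit)))"

definition "r_antipode_right =
  term_rule
    (EC (EG (Box Mul)) (EC (ET (EI [0]) (EG (Box Antipode))) (EG (Box Comul))))
    (EC (EG (Box Unit)) (EG (Box Counit)))"

definition "r_act_assoc =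
  term_rule
    (EC (EG (Box Act)) (ET (EG (Box Mul)) (EI [1])))
    (EC (EG (Box Act)) (ET (EI [0]) (EG (Box Act))))"

definition "r_act_unit = term_rule (EC (EG (Box Act)) (ET (EG (Box Unit)) (EI [1]))) (EI [1])"

definition "r_R_act =
  term_rule
    (EG (Box ActR))
    (EC (ET (EG (Box Mul)) (EI [1]))
      (EC (ET (EI [0]) (EG (Brd 1 0)))
      (EC (ET (ET (EI [0]) (EG (Box Act))) (EG (Box Antipode)))
      (EC (ET (EI [0,0]) (EG (Brd 0 1)))
      (EC (ET (ET (EG (Box Mul)) (EG (Box Comul))) (EI [1]))
      (EC (ET (ET (EI [0]) (EG (Brd 0 0))) (EI [1])) (ET (EG (Box Comul)) (EI [0,1]))))))))"

definition "r_antipode_unit = ([], [(0, Box Unit), (0, Box Antipode)], [(0, Box Unit)])"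

definition "r_tensor_coassoc = ([0,0],
    [(0, Box Comul), (2, Box Comul), (1, Brd 0 0), (0, Box Comul), (2, Box Comul), (1, Brd 0 0)],
    [(0, Box Comul), (2, Box Comul), (1, Brd 0 0), (2, Box Comul), (4, Box Comul), (3, Brd 0 0)])"

definition "r_antipode_mul_conv_left = ([0,0],
    [(0, Box Comul), (2, Box Comul), (1, Brd 0 0), (0, Box Mul), (0, Box Antipode), (1, Box Mul),
     (0, Box Mul)],
    [(0, Box Counit), (0, Box Counit), (0, Box Unit)])"

definition "r_antipode_mul_conv_right = ([0,0],
    [(0, Box Comul), (2, Box Comul), (1, Brd 0 0), (0, Box Mul), (1, Box Antipode),
     (2, Box Antipode), (1, Brd 0 0), (1, Box Mul), (0, Box Mul)],
    [(0, Box Counit), (0, Box Counit), (0, Box Unit)])"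

definition "r_antipode_mul =
  term_rule
    (EC (EG (Box Antipode)) (EG (Box Mul)))
    (EC (EG (Box Mul)) (EC (EG (Brd 0 0)) (ET (EG (Box Antipode)) (EG (Box Antipode)))))"

definition "r_tensor_mul_assoc = ([0,0,0,0,0,0],
    [(1, Brd 0 0), (0, Box Mul), (1, Box Mul), (1, Brd 0 0), (0, Box Mul), (1, Box Mul)],
    [(3, Brd 0 0), (2, Box Mul), (3, Box Mul), (1, Brd 0 0), (0, Box Mul), (1, Box Mul)])"

definition "r_comul_antipode_conv_left = ([0],
    [(0, Box Comul), (0, Box Comul), (2, Box Antipode), (2, Box Comul), (1, Brd 0 0),
     (0, Box Mul), (1, Box Mul)],
    [(0, Box Counit), (0, Box Unit), (1, Box Unit)])"

definition "r_comul_antipode_conv_right = ([0],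
    [(0, Box Comul), (0, Box Comul), (0, Brd 0 0), (0, Box Antipode), (1, Box Antipode),
     (2, Box Comul), (1, Brd 0 0), (0, Box Mul), (1, Box Mul)],
    [(0, Box Counit), (0, Box Unit), (1, Box Unit)])"

definition "r_comul_antipode =
  term_rule
    (EC (EG (Box Comul)) (EG (Box Antipode)))
    (EC (ET (EG (Box Antipode)) (EG (Box Antipode))) (EC (EG (Brd 0 0)) (EG (Box Comul))))"

definition "r_R_act_assoc =
  term_rule
    (EC (EG (Box ActR)) (ET (EG (Box Mul)) (EI [0,1])))
    (EC (EG (Box ActR)) (ET (EI [0]) (EG (Box ActR))))"

definition "r_R_act_unit =
  term_rule
    (EC (EG (Box ActR)) (ET (EG (Box Unit)) (EI [0,1])))
    (EI [0,1])"

definition "r_R_act_comul = ([0,0,1],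
    [(0, Box ActR), (0, Box Comul)],
    [(0, Box Comul), (1, Brd 0 0), (2, Brd 0 1), (0, Box Comul), (2, Box Comul), (1, Brd 0 0),
     (0, Box Mul), (1, Box ActR), (3, Box Antipode), (2, Brd 1 0), (1, Brd 0 0), (0, Box Mul)])"

definition "r_R_yetter_drinfeld =
  term_rule
    (EC (ET (EG (Box Mul)) (EG (Box ActR)))
      (EC (ET (EI [0]) (ET (EG (Brd 0 0)) (EI [0,1])))
      (ET (EG (Box Comul)) (ET (EG (Box Comul)) (EI [1])))))
    (EC (ET (EG (Box Mul)) (EI [0,1]))
      (EC (ET (EI [0]) (EBL [0,1] 0))
      (EC (ET (ET (EG (Box Comul)) (EI [1])) (EI [0]))
      (EC (ET (EG (Box ActR)) (EI [0]))
      (EC (ET (EI [0]) (EBR 0 [0,1])) (ET (EG (Box Comul)) (EI [0,1])))))))"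

lemmas hopf_rule_defs
    = term_rule_def natBL_def natBR_def r_mul_assoc_def r_mul_unit_left_def r_mul_unit_right_def
    r_comul_coassoc_def r_counit_left_def r_counit_right_def r_bialgebra_def r_comul_unit_def
    r_counit_mul_def r_counit_unit_def r_antipode_left_def r_antipode_right_def r_act_assoc_def
    r_act_unit_def r_R_act_def r_antipode_unit_def r_tensor_coassoc_def
    r_antipode_mul_conv_left_def r_antipode_mul_conv_right_def r_antipode_mul_def
    r_tensor_mul_assoc_def r_comul_antipode_conv_left_def r_comul_antipode_conv_right_def
    r_comul_antipode_def r_R_act_assoc_def r_R_act_unit_def r_R_act_comul_def
    r_R_yetter_drinfeld_def

context hopf_module_diagrams
begin

lemma valid_r_mul_assoc: "valid_rule r_mul_assoc"
  and valid_r_mul_unit_left: "valid_rule r_mul_unit_left"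
  and valid_r_mul_unit_right: "valid_rule r_mul_unit_right"
  and valid_r_comul_coassoc: "valid_rule r_comul_coassoc"
  and valid_r_counit_left: "valid_rule r_counit_left"
  and valid_r_counit_right: "valid_rule r_counit_right"
  and valid_r_bialgebra: "valid_rule r_bialgebra"
  and valid_r_comul_unit: "valid_rule r_comul_unit"
  and valid_r_counit_mul: "valid_rule r_counit_mul"
  and valid_r_counit_unit: "valid_rule r_counit_unit"
  and valid_r_antipode_left: "valid_rule r_antipode_left"
  and valid_r_antipode_right: "valid_rule r_antipode_right"
  and valid_r_act_assoc: "valid_rule r_act_assoc"
  and valid_r_act_unit: "valid_rule r_act_unit"
  unfolding r_mul_assoc_def r_mul_unit_left_def r_mul_unit_right_def r_comul_coassoc_def
      r_counit_left_def r_counit_right_def r_bialgebra_def r_comul_unit_def r_counit_mul_def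
      r_counit_unit_def r_antipode_left_def r_antipode_right_def r_act_assoc_def r_act_unit_def
  by (rule valid_term_rule; simp add: hopf_axioms act_axioms)+

lemma valid_r_R_act: "valid_rule r_R_act"
  unfolding r_R_act_def by (rule valid_term_rule) (simp_all add: R_act_def Let_def)

text \<open>The lists of operations below are certificates: simp evaluates run on them and checks
that they rewrite the left side of the rule into its right side.\<close>

lemma valid_r_antipode_unit: "valid_rule r_antipode_unit"
  unfolding r_antipode_unit_def
  by (rule valid_run[where ops="[Rv 2 0 r_mul_unit_right, Sw 1, Rv 0 0 r_comul_unit,
      Rw 1 0 r_antipode_left, Rw 0 0 r_counit_unit]"])
    (simp add: valid_r_comul_unit valid_r_antipode_left valid_r_counit_unit valid_r_mul_unit_right,
      simp_all add: hopf_rule_defs fits_def after_node_def eval_nat_numeral)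

lemma valid_r_tensor_coassoc: "valid_rule r_tensor_coassoc"
  unfolding r_tensor_coassoc_def
  by (rule valid_run[where ops="[Sw 2, Sw 1, Rw 0 0 r_comul_coassoc, Rv 3 2 (natBR 0 (Box Comul)),
      Sw 1, Sw 0, Sw 2, Sw 1, Rw 0 1 r_comul_coassoc, Sw 1, Sw 2, Sw 3, Sw 5, Sw 4,
      Rw 2 1 (natBL (Box Comul) 0), Sw 0]"])
    (simp add: valid_r_comul_coassoc valid_natBL valid_natBR,
      simp_all add: hopf_rule_defs fits_def after_node_def eval_nat_numeral)

lemma valid_r_antipode_mul_conv_left: "valid_rule r_antipode_mul_conv_left"
  unfolding r_antipode_mul_conv_left_def
  by (rule valid_run[where ops="[Sw 4, Rv 0 0 r_bialgebra, Rw 1 0 r_antipode_left,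
      Rw 0 0 r_counit_mul]"])
    (simp add: valid_r_antipode_left valid_r_bialgebra valid_r_counit_mul,
      simp_all add: hopf_rule_defs fits_def after_node_def eval_nat_numeral)

lemma valid_r_antipode_mul_conv_right: "valid_rule r_antipode_mul_conv_right"
  unfolding r_antipode_mul_conv_right_def
  by (rule valid_run[where ops="[Sw 3, Sw 4, Sw 5, Sw 6, Rw 7 0 r_mul_assoc, Sw 3,
      Rw 4 2 (natBL (Box Antipode) 0), Rw 3 2 (natBR 0 (Box Antipode)), Rv 6 1 r_mul_assoc,
      Rw 1 1 (natBR 0 (Box Comul)), Sw 4, Rw 2 1 r_antipode_right, Rv 1 1 (natBR 0 (Box Counit)),
      Sw 2, Sw 1, Sw 2, Sw 3, Rw 2 1 r_mul_unit_left, Sw 2, Rw 0 0 r_antipode_right, Sw 1]"])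
    (simp add: valid_r_antipode_right valid_r_mul_assoc valid_r_mul_unit_left valid_natBL
      valid_natBR,
      simp_all add: hopf_rule_defs fits_def after_node_def eval_nat_numeral)

lemma valid_r_antipode_mul: "valid_rule r_antipode_mul"
  unfolding r_antipode_mul_def term_rule_def
  by (rule valid_run[where ops="[Rv 0 1 r_counit_right, Rv 0 0 r_counit_right,
      Rv 6 0 r_mul_unit_right, Sw 1, Rw 2 1 (natBL (Box Counit) 0), Sw 6, Sw 5,
      Rv 3 2 r_antipode_mul_conv_right, Sw 11, Sw 12, Rv 13 0 r_mul_assoc, Rv 0 0 r_tensor_coassoc,
      Sw 10, Sw 9, Sw 8, Sw 7, Sw 6, Sw 11, Sw 10, Sw 9, Sw 8, Sw 7, Sw 12, Sw 11, Sw 10, Sw 9,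
      Rw 3 0 r_antipode_mul_conv_left, Sw 3, Rv 2 1 (natBR 0 (Box Counit)), Sw 2, Sw 1,
      Rw 0 0 r_counit_left, Rw 0 1 r_counit_left, Sw 0, Sw 1, Sw 2, Sw 3, Rw 4 0 r_mul_unit_left]"])
    (simp add: valid_r_antipode_mul_conv_left valid_r_antipode_mul_conv_right valid_r_tensor_coassoc
      valid_r_counit_left valid_r_counit_right valid_r_mul_assoc valid_r_mul_unit_left
      valid_r_mul_unit_right valid_natBL valid_natBR,
      simp_all add: hopf_rule_defs fits_def after_node_def eval_nat_numeral)

lemma valid_r_tensor_mul_assoc: "valid_rule r_tensor_mul_assoc"
  unfolding r_tensor_mul_assoc_def
  by (rule valid_run[where ops="[Sw 1, Sw 2, Rw 3 0 r_mul_assoc, Rw 1 2 (natBL (Box Mul) 0), Sw 5,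
      Sw 4, Rw 3 3 r_mul_assoc, Sw 0, Sw 4, Sw 3, Rv 1 1 (natBR 0 (Box Mul)), Sw 2, Sw 4]"])
    (simp add: valid_r_mul_assoc valid_natBL valid_natBR,
      simp_all add: hopf_rule_defs fits_def after_node_def eval_nat_numeral)

lemma valid_r_comul_antipode_conv_left: "valid_rule r_comul_antipode_conv_left"
  unfolding r_comul_antipode_conv_left_def
  by (rule valid_run[where ops="[Sw 1, Rv 2 0 r_bialgebra, Rw 0 0 r_antipode_right, Sw 0, Sw 1,
      Rw 0 1 r_comul_unit, Sw 1, Sw 0]"])
    (simp add: valid_r_comul_unit valid_r_antipode_right valid_r_bialgebra,
      simp_all add: hopf_rule_defs fits_def after_node_def eval_nat_numeral)

lemma valid_r_comul_antipode_conv_right: "valid_rule r_comul_antipode_conv_right"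
  unfolding r_comul_antipode_conv_right_def
  by (rule valid_run[where ops="[Rw 0 0 r_comul_coassoc, Sw 4, Sw 3, Sw 4, Sw 5,
      Rw 4 1 (natBL (Box Antipode) 0), Sw 2, Rv 1 1 r_comul_coassoc, Rw 2 0 (natBR 0 (Box Comul)),
      Sw 4, Sw 5, Rw 3 0 r_antipode_left, Rv 2 0 (natBR 0 (Box Counit)), Rw 1 1 r_counit_left, Sw 1,
      Sw 2, Rw 0 0 r_antipode_left, Sw 1]"])
    (simp add: valid_r_antipode_left valid_r_comul_coassoc valid_r_counit_left valid_natBL
      valid_natBR,
      simp_all add: hopf_rule_defs fits_def after_node_def eval_nat_numeral)

lemma valid_r_comul_antipode: "valid_rule r_comul_antipode"
  unfolding r_comul_antipode_def term_rule_def
  by (rule valid_run[where ops="[Rv 0 0 r_counit_left, Rv 4 1 r_mul_unit_left,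
      Rv 6 0 r_mul_unit_left, Rv 4 0 (natBL (Box Unit) 0), Sw 6, Sw 5, Sw 4, Sw 3, Sw 2, Sw 4, Sw 3,
      Rv 1 0 r_comul_antipode_conv_right, Rw 0 0 r_comul_coassoc, Sw 9, Sw 8, Sw 7, Sw 10, Sw 9,
      Sw 8, Sw 13, Rw 9 0 r_tensor_mul_assoc, Sw 5, Sw 4, Sw 3, Sw 2, Sw 6, Sw 5, Sw 4, Sw 3, Sw 7,
      Sw 6, Sw 5, Sw 4, Sw 8, Sw 7, Sw 6, Sw 5, Sw 9, Sw 8, Sw 7, Sw 6, Sw 10, Sw 9, Sw 8, Sw 7,
      Rw 1 1 r_comul_antipode_conv_left, Rw 0 0 r_counit_right, Sw 1, Sw 0, Sw 2, Sw 1, Sw 4, Sw 3,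
      Sw 2, Sw 5, Sw 4, Rw 3 1 (natBR 0 (Box Unit)), Sw 4, Sw 3, Sw 2, Sw 3, Sw 5, Sw 4,
      Rw 3 0 r_mul_unit_right, Sw 2, Sw 3, Sw 4, Rw 3 1 r_mul_unit_right, Sw 2]"])
    (simp add: valid_r_comul_antipode_conv_left valid_r_comul_antipode_conv_right
      valid_r_tensor_mul_assoc valid_r_comul_coassoc valid_r_counit_left valid_r_counit_right
      valid_r_mul_unit_left valid_r_mul_unit_right valid_natBL valid_natBR,
      simp_all add: hopf_rule_defs fits_def after_node_def eval_nat_numeral)

lemma valid_r_R_act_assoc: "valid_rule r_R_act_assoc"
  unfolding r_R_act_assoc_def term_rule_def
  by (rule valid_run[where ops="[Rw 1 0 r_R_act, Rw 0 0 r_bialgebra, Sw 3, Sw 4, Rw 5 0 r_mul_assoc,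
      Sw 6, Sw 7, Sw 8, Sw 9, Sw 10, Rw 11 0 r_mul_assoc, Sw 5, Sw 6, Sw 7, Sw 8, Sw 9,
      Rw 10 1 r_mul_assoc, Rw 3 2 (natBL (Box Mul) 0), Rw 5 3 r_bialgebra, Sw 8, Sw 9,
      Rw 10 3 r_act_assoc, Rw 8 5 (natBL (Box Mul) 1), Sw 12, Sw 11, Rw 10 6 r_antipode_mul, Sw 13,
      Sw 14, Rw 15 3 (natBR 1 (Box Mul)), Rw 14 3 (natBL (Box Act) 0), Rw 13 4 (natBL (Box Act) 0),
      Rw 17 4 (natBL (Box Act) 0), Sw 16, Rw 15 5 (natBL (Box Act) 0), Sw 10,
      Rw 11 6 (natBL (Box Antipode) 0), Rw 10 6 (natBR 0 (Box Antipode)), Sw 12,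
      Rw 11 5 (natBR 1 (Box Antipode)), Sw 13, Rw 12 4 (natBR 0 (Box Antipode)), Sw 17, Sw 16,
      Sw 15, Sw 14, Rw 13 3 (natBR 0 (Box Antipode)), Sw 14, Sw 13, Sw 12, Sw 15, Sw 14, Sw 13,
      Rw 12 6 (natBR 1 (Box Antipode)), Sw 13, Sw 16, Sw 15, Rw 14 5 (natBR 0 (Box Antipode)),
      Sw 15, Sw 18, Sw 17, Rw 16 4 (natBR 0 (Box Antipode)), Sw 0, Sw 2, Sw 1, Sw 5, Sw 4, Sw 3,
      Sw 2, Rv 1 2 (natBL (Box Comul) 0), Rv 6 2 (natBL (Box Comul) 0), Sw 3, Sw 2, Sw 1, Sw 4,
      Sw 3, Sw 2, Sw 5, Sw 4, Sw 3, Rv 2 1 (natBL (Box Comul) 0), Sw 4, Sw 5, Sw 6, Sw 7, Sw 9,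
      Sw 8, Sw 10, Sw 9, Sw 11, Sw 10, Sw 12, Sw 11, Sw 13, Sw 12, Rw 10 5 (natBL (Brd 0 1) 0),
      Sw 8, Sw 9, Sw 15, Sw 14, Sw 13, Sw 12, Sw 13, Sw 14, Sw 17, Sw 16, Sw 15,
      Rw 10 4 (natBL (Brd 0 0) 0), Sw 12, Sw 13, Sw 14, Sw 11, Sw 12, Sw 10, Sw 11, Sw 9, Sw 10,
      Sw 8, Sw 9, Sw 7, Sw 6, Sw 5, Sw 4, Rw 2 1 (natBL (Box Comul) 0), Sw 3, Sw 4, Sw 5, Sw 2,
      Sw 3, Sw 4, Sw 1, Sw 2, Sw 3, Rw 6 2 (natBL (Box Comul) 0), Sw 7, Sw 8, Sw 9, Sw 6, Sw 7,
      Sw 8, Sw 5, Sw 6, Sw 7, Sw 4, Sw 5, Sw 6, Rw 10 3 (natBL (Box Comul) 0),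
      Rw 1 2 (natBL (Box Comul) 0), Rv 15 4 (natBR 0 (Box Antipode)), Sw 16, Sw 17,
      Rv 14 5 (natBR 0 (Box Antipode)), Sw 15, Rv 13 6 (natBR 1 (Box Antipode)), Sw 14, Sw 13,
      Sw 12, Sw 11, Sw 10, Rv 9 3 (natBR 0 (Box Antipode)), Sw 8, Sw 7, Sw 6,
      Rv 5 3 (natBR 0 (Box Antipode)), Rv 4 4 (natBR 1 (Box Antipode)), Rv 15 5 (natBL (Box Act) 0),
      Sw 14, Rv 12 5 (natBR 0 (Box Act)), Sw 11, Sw 10, Sw 9, Sw 8, Sw 7,
      Rv 15 4 (natBL (Box Act) 0), Sw 14, Rv 5 3 (natBL (Box Act) 0), Sw 4, Rv 16 2 r_mul_assoc,
      Sw 15, Sw 14, Sw 13, Sw 12, Sw 11, Rv 9 2 (natBR 0 (Box Mul)), Sw 8, Sw 7,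
      Rv 16 1 r_mul_assoc, Sw 15, Sw 14, Sw 13, Sw 12, Sw 11, Rv 9 1 (natBR 0 (Box Mul)), Sw 8,
      Rv 16 0 r_mul_assoc, Sw 15, Sw 14, Sw 13, Sw 12, Sw 11, Rv 7 1 r_mul_assoc, Sw 6, Sw 5, Sw 4,
      Sw 3, Sw 2, Rv 9 0 r_R_act, Rv 0 1 r_R_act]"])
    (simp add: valid_r_antipode_mul valid_r_R_act valid_r_act_assoc valid_r_bialgebra
      valid_r_mul_assoc valid_natBL valid_natBR,
      simp_all add: hopf_rule_defs fits_def after_node_def eval_nat_numeral)

lemma valid_r_R_act_unit: "valid_rule r_R_act_unit"
  unfolding r_R_act_unit_def term_rule_def
  by (rule valid_run[where ops="[Rw 1 0 r_R_act, Sw 3, Sw 4, Sw 5, Sw 6, Sw 7, Rw 8 0 r_mul_assoc,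
      Sw 5, Rw 6 2 (natBL (Box Act) 0), Rw 5 3 (natBR 1 (Box Antipode)),
      Rw 6 2 (natBR 0 (Box Antipode)), Rv 2 1 (natBL (Box Comul) 0), Rw 0 0 r_comul_unit, Sw 0,
      Sw 1, Rw 0 0 r_comul_unit, Sw 0, Sw 2, Sw 1, Sw 3, Rw 2 0 (natBL (Box Unit) 0),
      Rw 0 0 (natBL (Box Unit) 0), Sw 2, Sw 1, Sw 3, Sw 2, Sw 4, Rw 3 1 (natBL (Box Unit) 0),
      Rw 0 1 (natBL (Box Unit) 1), Rw 0 1 (natBR 1 (Box Unit)), Sw 2, Sw 1, Sw 4, Sw 3, Sw 2, Sw 3,
      Sw 5, Sw 4, Rw 3 0 r_mul_unit_left, Rw 0 1 r_antipode_unit, Rw 0 0 r_mul_unit_right,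
      Rw 0 1 r_act_unit]"])
    (simp add: valid_r_comul_unit valid_r_antipode_unit valid_r_R_act valid_r_act_unit
      valid_r_mul_assoc valid_r_mul_unit_left valid_r_mul_unit_right valid_natBL valid_natBR,
      simp_all add: hopf_rule_defs fits_def after_node_def eval_nat_numeral)

lemma valid_r_R_act_comul: "valid_rule r_R_act_comul"
  unfolding r_R_act_comul_def
  by (rule valid_run[where ops="[Rw 0 0 r_R_act, Rw 8 0 r_bialgebra, Sw 7, Sw 6, Sw 5, Sw 4, Sw 3,
      Rw 2 0 r_bialgebra, Sw 5, Sw 6, Sw 7, Sw 8, Sw 9, Sw 10, Sw 11, Sw 12, Rw 13 0 r_mul_assoc,
      Sw 1, Rw 0 0 r_comul_coassoc, Sw 5, Sw 6, Sw 7, Sw 8, Sw 9, Sw 10,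
      Rw 11 2 (natBL (Box Mul) 0), Sw 15, Sw 14, Rw 13 3 r_mul_assoc, Sw 4, Sw 3, Sw 5, Sw 4, Sw 7,
      Sw 6, Sw 5, Sw 7, Sw 6, Sw 8, Sw 7, Rw 6 3 (natBL (Box Act) 0),
      Rw 5 4 (natBR 1 (Box Antipode)), Rw 6 3 (natBR 0 (Box Antipode)), Sw 10, Sw 9, Sw 8,
      Rw 7 3 r_comul_antipode, Sw 11, Sw 10, Sw 9, Sw 13, Sw 12, Sw 11,
      Rw 10 3 (natBR 0 (Box Antipode)), Sw 13, Sw 12, Sw 11, Sw 14, Sw 13,
      Rw 12 2 (natBR 0 (Box Antipode)), Rv 2 2 (natBL (Box Comul) 0), Sw 9, Sw 8, Sw 7, Sw 6, Sw 5,
      Rv 4 2 (natBR 0 (Box Comul)), Rv 3 3 (natBR 0 (Box Comul)), Rv 10 4 (natBR 0 (Box Comul)),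
      Sw 7, Sw 6, Sw 8, Sw 7, Sw 9, Sw 8, Rv 7 5 (natBR 1 (Box Comul)),
      Rv 6 5 (natBL (Box Comul) 1), Rv 5 4 (natBL (Box Comul) 0), Rv 4 3 (natBL (Box Comul) 0),
      Sw 3, Sw 6, Sw 12, Sw 11, Sw 10, Sw 9, Sw 8, Sw 13, Sw 12, Sw 11, Sw 10, Sw 18, Sw 17, Sw 16,
      Sw 15, Sw 14, Sw 13, Sw 12, Sw 11, Rw 4 4 (natBR 0 (Box Comul)), Rv 2 2 r_comul_coassoc, Sw 3,
      Sw 4, Rw 5 2 (natBL (Box Comul) 0), Rw 6 3 (natBL (Box Comul) 0), Sw 7, Sw 8, Sw 6, Sw 7,
      Rv 1 1 r_comul_coassoc, Sw 2, Sw 3, Rw 4 1 (natBL (Box Comul) 0), Sw 5, Sw 4, Sw 3,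
      Rv 16 2 (natBR 0 (Box Antipode)), Sw 17, Sw 18, Sw 19, Rv 15 3 (natBR 0 (Box Antipode)),
      Sw 16, Sw 17, Rv 14 4 (natBR 0 (Box Antipode)), Rv 13 5 (natBR 0 (Box Antipode)), Sw 12,
      Rv 11 6 (natBR 1 (Box Antipode)), Sw 12, Sw 11, Rv 15 4 (natBL (Box Antipode) 0), Sw 16,
      Sw 14, Sw 13, Sw 12, Rv 11 4 (natBR 0 (Box Antipode)), Rv 10 5 (natBR 1 (Box Antipode)),
      Rv 14 5 (natBL (Box Act) 0), Sw 13, Rv 11 4 (natBL (Box Act) 0), Sw 10,
      Rv 15 3 (natBL (Box Mul) 0), Sw 14, Sw 13, Rv 16 2 (natBL (Box Mul) 0), Sw 15, Sw 14,
      Rv 0 0 r_comul_coassoc, Sw 1, Sw 2, Rv 18 0 r_mul_assoc, Sw 17, Sw 16, Sw 15,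
      Rv 13 2 r_mul_assoc, Sw 12, Sw 11, Sw 10, Sw 9, Sw 8, Rv 6 2 r_R_act, Sw 6]"])
    (simp add: valid_r_comul_antipode valid_r_R_act valid_r_bialgebra valid_r_comul_coassoc
      valid_r_mul_assoc valid_natBL valid_natBR,
      simp_all add: hopf_rule_defs fits_def after_node_def eval_nat_numeral)

lemma valid_r_R_yetter_drinfeld: "valid_rule r_R_yetter_drinfeld"
  unfolding r_R_yetter_drinfeld_def term_rule_def
  by (rule valid_run[where ops="[Sw 3, Rv 3 1 r_mul_unit_right, Sw 4, Sw 3,
      Rv 4 2 (natBR 0 (Box Unit)), Rv 4 3 (natBR 1 (Box Unit)), Sw 3, Sw 2, Sw 1, Sw 0,
      Rv 0 2 (natBL (Box Unit) 1), Sw 1, Rv 0 1 (natBL (Box Unit) 0), Sw 1, Sw 0,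
      Rv 1 1 r_counit_right, Rv 2 2 r_antipode_left, Rw 4 2 (natBL (Box Mul) 0), Sw 3,
      Rw 4 2 (natBL (Box Antipode) 0), Rw 6 3 (natBL (Box Mul) 1), Sw 8, Sw 9, Sw 10, Sw 5, Sw 4,
      Rw 6 3 (natBL (Box Antipode) 1), Sw 7, Sw 8, Sw 9, Rw 11 3 (natBR 1 (Box Mul)),
      Rw 13 2 (natBR 0 (Box Mul)), Sw 12, Rv 0 0 r_comul_coassoc, Sw 1, Sw 2, Sw 3, Sw 4, Sw 5,
      Rv 0 0 r_comul_coassoc, Sw 1, Sw 2, Rv 15 1 r_mul_assoc, Sw 14, Sw 13, Rv 16 0 r_mul_assoc,
      Sw 15, Sw 14, Rv 13 0 r_mul_assoc, Sw 12, Sw 11, Sw 10, Sw 9, Rv 3 0 r_R_act_comul]"])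
    (simp add: valid_r_R_act_comul valid_r_antipode_left valid_r_comul_coassoc valid_r_counit_right
      valid_r_mul_assoc valid_r_mul_unit_right valid_natBL valid_natBR,
      simp_all add: hopf_rule_defs fits_def after_node_def eval_nat_numeral)

end

lemma antipode_antimultiplicative:
  assumes "braided_monoidal_cat C" "hopf_algebra C H m u \<Delta> \<epsilon> S"
  shows "Cmp C S m = chain C [m, Br C H H, Tm C S S]"
proof -
  interpret hopf_module_diagrams C H H m u \<Delta> \<epsilon> S m
    using assms by unfold_locales (simp_all add: hopf_algebra_def hmodule_def Let_def)
  show ?thesis
    using term_rule_sound[OF valid_r_antipode_mul[unfolded r_antipode_mul_def]] by simp
qed

lemma comul_antipode:
  assumes "braided_monoidal_cat C" "hopf_algebra C H m u \<Delta> \<epsilon> S"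
  shows "Cmp C \<Delta> S = chain C [Tm C S S, Br C H H, \<Delta>]"
proof -
  interpret hopf_module_diagrams C H H m u \<Delta> \<epsilon> S m
    using assms by unfold_locales (simp_all add: hopf_algebra_def hmodule_def Let_def)
  show ?thesis
    using term_rule_sound[OF valid_r_comul_antipode[unfolded r_comul_antipode_def]] by simp
qed

lemma R_yd_module:
  assumes "braided_monoidal_cat C" "hopf_algebra C H m u \<Delta> \<epsilon> S" "hmodule C H m u A aA"
  shows "yd_module C H m u \<Delta> \<epsilon> (Tob C H A) (R_act C H m \<Delta> S A aA) (R_coact C \<Delta> A)"
proof -
  interpret hopf_module_diagrams C H A m u \<Delta> \<epsilon> S aA
    using assms by unfold_locales (simp_all add: hmodule_def)
  have "hmodule C H m u (Tob C H A) (R_act C H m \<Delta> S A aA)"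
    using term_rule_sound[OF valid_r_R_act_assoc[unfolded r_R_act_assoc_def]]
      term_rule_sound[OF valid_r_R_act_unit[unfolded r_R_act_unit_def]]
    by (simp add: hmodule_def hom_def R_act_def Let_def)
  moreover have "hcomodule C H \<Delta> \<epsilon> (Tob C H A) (R_coact C \<Delta> A)"
    using interchange[of \<Delta> "Tm C \<Delta> (Idm C H)" "Idm C A" "Idm C A"]
      interchange[of \<Delta> "Tm C (Idm C H) \<Delta>" "Idm C A" "Idm C A"]
      interchange[of \<Delta> "Tm C \<epsilon> (Idm C H)" "Idm C A" "Idm C A"] hopf_axioms(9,10)
    by (simp add: hcomodule_def hom_def R_coact_def idm_tob)
  moreover have "chain C [Tm C m (R_act C H m \<Delta> S A aA),
        Tm C (Tm C (Idm C H) (Br C H H)) (Idm C (Tob C H A)), Tm C \<Delta> (R_coact C \<Delta> A)]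
    = chain C [Tm C m (Idm C (Tob C H A)), Tm C (Idm C H) (Br C (Tob C H A) H),
        Tm C (R_coact C \<Delta> A) (Idm C H), Tm C (R_act C H m \<Delta> S A aA) (Idm C H),
        Tm C (Idm C H) (Br C H (Tob C H A)), Tm C \<Delta> (Idm C (Tob C H A))]"
    using term_rule_sound[OF valid_r_R_yetter_drinfeld[unfolded r_R_yetter_drinfeld_def]]
    by (simp add: R_coact_def)
  ultimately show ?thesis by (simp add: yd_module_def)
qed

section \<open>Transport of Yetter-Drinfeld structures along isomorphisms\<close>

datatype yd_box = YMul | YUnit | YComul | YCounit | YAct | YCoact | YIso | YIsoInv | YActT | YCoactT

instantiation yd_box :: diagram_signature
begin
fun box_dom_yd_box :: "yd_box \<Rightarrow> nat list" where
  "box_dom_yd_box YMul = [0,0]" | "box_dom_yd_box YUnit = []" | "box_dom_yd_box YComul = [0]"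
| "box_dom_yd_box YCounit = [0]" | "box_dom_yd_box YAct = [0,1]" | "box_dom_yd_box YCoact = [1]"
| "box_dom_yd_box YIso = [1]" | "box_dom_yd_box YIsoInv = [2]" | "box_dom_yd_box YActT = [0,2]"
| "box_dom_yd_box YCoactT = [2]"
fun box_cod_yd_box :: "yd_box \<Rightarrow> nat list" where
  "box_cod_yd_box YMul = [0]" | "box_cod_yd_box YUnit = [0]" | "box_cod_yd_box YComul = [0,0]"
| "box_cod_yd_box YCounit = []" | "box_cod_yd_box YAct = [1]" | "box_cod_yd_box YCoact = [0,1]"
| "box_cod_yd_box YIso = [2]" | "box_cod_yd_box YIsoInv = [1]" | "box_cod_yd_box YActT = [2]"
| "box_cod_yd_box YCoactT = [0,2]"
instance ..
end

definition "r_W_act =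
  term_rule
    (EG (Box YActT))
    (EC (EG (Box YIso)) (EC (EG (Box YAct)) (ET (EI [0]) (EG (Box YIsoInv)))))"

definition "r_W_coact =
  term_rule
    (EG (Box YCoactT))
    (EC (ET (EI [0]) (EG (Box YIso))) (EC (EG (Box YCoact)) (EG (Box YIsoInv))))"

definition "r_iso_inv = term_rule (EC (EG (Box YIsoInv)) (EG (Box YIso))) (EI [1])"

definition "r_inv_iso = term_rule (EC (EG (Box YIso)) (EG (Box YIsoInv))) (EI [2])"

definition "r_V_act_assoc =
  term_rule
    (EC (EG (Box YAct)) (ET (EG (Box YMul)) (EI [1])))
    (EC (EG (Box YAct)) (ET (EI [0]) (EG (Box YAct))))"

definition "r_V_act_unit = term_rule (EC (EG (Box YAct)) (ET (EG (Box YUnit)) (EI [1]))) (EI [1])"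

definition "r_V_coassoc =
  term_rule
    (EC (ET (EG (Box YComul)) (EI [1])) (EG (Box YCoact)))
    (EC (ET (EI [0]) (EG (Box YCoact))) (EG (Box YCoact)))"

definition "r_V_counit = term_rule (EC (ET (EG (Box YCounit)) (EI [1])) (EG (Box YCoact))) (EI [1])"

definition "r_V_yd =
  term_rule
    (EC (ET (EG (Box YMul)) (EG (Box YAct)))
      (EC (ET (EI [0]) (ET (EG (Brd 0 0)) (EI [1]))) (ET (EG (Box YComul)) (EG (Box YCoact)))))
    (EC (ET (EG (Box YMul)) (EI [1]))
      (EC (ET (EI [0]) (EG (Brd 1 0)))
      (EC (ET (EG (Box YCoact)) (EI [0]))
      (EC (ET (EG (Box YAct)) (EI [0]))
      (EC (ET (EI [0]) (EG (Brd 0 1))) (ET (EG (Box YComul)) (EI [1])))))))"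

definition "r_W_yd =
  term_rule
    (EC (ET (EG (Box YMul)) (EG (Box YActT)))
      (EC (ET (EI [0]) (ET (EG (Brd 0 0)) (EI [2]))) (ET (EG (Box YComul)) (EG (Box YCoactT)))))
    (EC (ET (EG (Box YMul)) (EI [2]))
      (EC (ET (EI [0]) (EG (Brd 2 0)))
      (EC (ET (EG (Box YCoactT)) (EI [0]))
      (EC (ET (EG (Box YActT)) (EI [0]))
      (EC (ET (EI [0]) (EG (Brd 0 2))) (ET (EG (Box YComul)) (EI [2])))))))"

locale yd_transport_diagrams = braided_cat C for C :: "('o,'m) bcat" +
  fixes H V W :: 'o and m u \<Delta> \<epsilon> a \<delta> f :: 'm
  assumes structure_homs: "hom C m (Tob C H H) H" "hom C u (Uob C) H" "hom C \<Delta> H (Tob C H H)"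
      "hom C \<epsilon> H (Uob C)"
    and yd: "yd_module C H m u \<Delta> \<epsilon> V a \<delta>"
    and iso: "iso C f" and f_hom: "hom C f V W"
begin

lemma yd_axioms:
  "hom C a (Tob C H V) V" "Cmp C a (Tm C m (Idm C V)) = Cmp C a (Tm C (Idm C H) a)"
  "Cmp C a (Tm C u (Idm C V)) = Idm C V" "hom C \<delta> V (Tob C H V)"
  "Cmp C (Tm C \<Delta> (Idm C V)) \<delta> = Cmp C (Tm C (Idm C H) \<delta>) \<delta>"
  "Cmp C (Tm C \<epsilon> (Idm C V)) \<delta> = Idm C V"
  "chain C [Tm C m a, Tm C (Tm C (Idm C H) (Br C H H)) (Idm C V), Tm C \<Delta> \<delta>]
    = chain C [Tm C m (Idm C V), Tm C (Idm C H) (Br C V H), Tm C \<delta> (Idm C H),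
               Tm C a (Idm C H), Tm C (Idm C H) (Br C H V), Tm C \<Delta> (Idm C V)]"
  using yd unfolding yd_module_def hmodule_def hcomodule_def by blast+

lemma transport_types [simp]:
  "Dom C m = Tob C H H" "Cod C m = H" "Dom C u = Uob C" "Cod C u = H"
  "Dom C \<Delta> = H" "Cod C \<Delta> = Tob C H H" "Dom C \<epsilon> = H" "Cod C \<epsilon> = Uob C"
  "Dom C a = Tob C H V" "Cod C a = V" "Dom C \<delta> = V" "Cod C \<delta> = Tob C H V"
  "Dom C f = V" "Cod C f = W" "Dom C (inv C f) = W" "Cod C (inv C f) = V"
  using structure_homs yd_axioms(1,4) f_hom dom_inv[OF iso] cod_inv[OF iso] by (auto simp: hom_def)

fun yd_wire :: "nat \<Rightarrow> 'o" where
  "yd_wire 0 = H" | "yd_wire (Suc 0) = V" | "yd_wire (Suc (Suc n)) = W"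

lemma yd_wire_2 [simp]: "yd_wire 2 = W"
  by (simp add: numeral_2_eq_2)

fun yd_sem :: "yd_box \<Rightarrow> 'm" where
  "yd_sem YMul = m" | "yd_sem YUnit = u" | "yd_sem YComul = \<Delta>" | "yd_sem YCounit = \<epsilon>"
| "yd_sem YAct = a" | "yd_sem YCoact = \<delta>" | "yd_sem YIso = f" | "yd_sem YIsoInv = inv C f"
| "yd_sem YActT = chain C [f, a, Tm C (Idm C H) (inv C f)]"
| "yd_sem YCoactT = chain C [Tm C (Idm C H) f, \<delta>, inv C f]"

lemma yd_sem_hom: "hom C (yd_sem b) (tensor_obs C yd_wire (box_dom b))
    (tensor_obs C yd_wire (box_cod b))"
  by (cases b) (simp_all add: hom_def)

end

sublocale yd_transport_diagrams \<subseteq> diagram_model C yd_wire yd_sem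
  by unfold_locales (rule yd_sem_hom)

definition "r_W_act_assoc =
  term_rule
    (EC (EG (Box YActT)) (ET (EG (Box YMul)) (EI [2])))
    (EC (EG (Box YActT)) (ET (EI [0]) (EG (Box YActT))))"

definition "r_W_act_unit = term_rule (EC (EG (Box YActT)) (ET (EG (Box YUnit)) (EI [2]))) (EI [2])"

definition "r_W_coassoc =
  term_rule
    (EC (ET (EG (Box YComul)) (EI [2])) (EG (Box YCoactT)))
    (EC (ET (EI [0]) (EG (Box YCoactT))) (EG (Box YCoactT)))"

definition "r_W_counit =
  term_rule
    (EC (ET (EG (Box YCounit)) (EI [2])) (EG (Box YCoactT)))
    (EI [2])"

definition "r_iso_act =
  term_rule
    (EC (EG (Box YActT)) (ET (EI [0]) (EG (Box YIso))))
    (EC (EG (Box YIso)) (EG (Box YAct)))"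

definition "r_iso_coact =
  term_rule
    (EC (EG (Box YCoactT)) (EG (Box YIso)))
    (EC (ET (EI [0]) (EG (Box YIso))) (EG (Box YCoact)))"

lemmas yd_rule_defs = term_rule_def natBL_def natBR_def r_W_act_def r_W_coact_def r_iso_inv_def
  r_inv_iso_def r_V_act_assoc_def r_V_act_unit_def r_V_coassoc_def r_V_counit_def r_V_yd_def

context yd_transport_diagrams
begin

lemma valid_r_W_act: "valid_rule r_W_act"
  and valid_r_W_coact: "valid_rule r_W_coact"
  unfolding r_W_act_def r_W_coact_def by (rule valid_term_rule; simp)+

lemma valid_r_iso_inv: "valid_rule r_iso_inv"
  and valid_r_inv_iso: "valid_rule r_inv_iso"
  unfolding r_iso_inv_def r_inv_iso_def
  by (rule valid_term_rule; simp add: inv_cmp_self[OF iso] cmp_inv_self[OF iso])+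

lemma valid_r_V_act_assoc: "valid_rule r_V_act_assoc"
  and valid_r_V_act_unit: "valid_rule r_V_act_unit"
  and valid_r_V_coassoc: "valid_rule r_V_coassoc"
  and valid_r_V_counit: "valid_rule r_V_counit"
  and valid_r_V_yd: "valid_rule r_V_yd"
  unfolding r_V_act_assoc_def r_V_act_unit_def r_V_coassoc_def r_V_counit_def r_V_yd_def
  by (rule valid_term_rule; simp add: yd_axioms(2,3,5,6) yd_axioms(7)[simplified])+

end

context yd_transport_diagrams
begin

lemma valid_r_W_act_assoc: "valid_rule r_W_act_assoc"
  unfolding r_W_act_assoc_def term_rule_def
  by (rule valid_run[where ops="[Rw 1 0 r_W_act, Sw 0, Rw 1 0 r_V_act_assoc, Rv 2 1 r_iso_inv,
      Rv 0 1 r_W_act, Rv 1 0 r_W_act]"])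
    (simp add: valid_r_W_act valid_r_V_act_assoc valid_r_iso_inv,
      simp_all add: yd_rule_defs fits_def after_node_def eval_nat_numeral)

lemma valid_r_W_act_unit: "valid_rule r_W_act_unit"
  unfolding r_W_act_unit_def term_rule_def
  by (rule valid_run[where ops="[Rw 1 0 r_W_act, Sw 0, Rw 1 0 r_V_act_unit, Rw 0 0 r_inv_iso]"])
    (simp add: valid_r_W_act valid_r_V_act_unit valid_r_inv_iso,
      simp_all add: yd_rule_defs fits_def after_node_def eval_nat_numeral)

lemma valid_r_W_coassoc: "valid_rule r_W_coassoc"
  unfolding r_W_coassoc_def term_rule_def
  by (rule valid_run[where ops="[Rw 0 0 r_W_coact, Sw 2, Rw 1 0 r_V_coassoc, Rv 2 1 r_iso_inv,
      Rv 0 0 r_W_coact, Rv 1 1 r_W_coact]"])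
    (simp add: valid_r_W_coact valid_r_V_coassoc valid_r_iso_inv,
      simp_all add: yd_rule_defs fits_def after_node_def eval_nat_numeral)

lemma valid_r_W_counit: "valid_rule r_W_counit"
  unfolding r_W_counit_def term_rule_def
  by (rule valid_run[where ops="[Rw 0 0 r_W_coact, Sw 2, Rw 1 0 r_V_counit, Rw 0 0 r_inv_iso]"])
    (simp add: valid_r_W_coact valid_r_V_counit valid_r_inv_iso,
      simp_all add: yd_rule_defs fits_def after_node_def eval_nat_numeral)

lemma valid_r_W_yd: "valid_rule r_W_yd"
  unfolding r_W_yd_def term_rule_def
  by (rule valid_run[where ops="[Rw 1 2 r_W_coact, Rw 6 1 r_W_act, Sw 3, Sw 4, Rw 5 2 r_iso_inv,
      Sw 0, Rw 1 0 r_V_yd, Sw 0, Rw 1 1 (natBR 0 (Box YIsoInv)), Rv 4 0 r_iso_inv, Rv 2 0 r_W_act,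
      Sw 6, Rv 5 1 (natBL (Box YIso) 0), Rv 3 0 r_W_coact]"])
    (simp add: valid_r_W_act valid_r_W_coact valid_r_iso_inv valid_r_V_yd valid_natBL valid_natBR,
      simp_all add: yd_rule_defs fits_def after_node_def eval_nat_numeral)

lemma valid_r_iso_act: "valid_rule r_iso_act"
  unfolding r_iso_act_def term_rule_def
  by (rule valid_run[where ops="[Rw 1 0 r_W_act, Rw 0 1 r_iso_inv]"])
    (simp add: valid_r_W_act valid_r_iso_inv,
      simp_all add: yd_rule_defs fits_def after_node_def eval_nat_numeral)

lemma valid_r_iso_coact: "valid_rule r_iso_coact"
  unfolding r_iso_coact_def term_rule_def
  by (rule valid_run[where ops="[Rw 1 0 r_W_coact, Rw 0 0 r_iso_inv]"])
    (simp add: valid_r_W_coact valid_r_iso_inv,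
      simp_all add: yd_rule_defs fits_def after_node_def eval_nat_numeral)

end

lemma yd_transport:
  assumes "braided_monoidal_cat C"
    and "hom C m (Tob C H H) H" "hom C u (Uob C) H" "hom C \<Delta> H (Tob C H H)" "hom C \<epsilon> H (Uob C)"
    and "yd_module C H m u \<Delta> \<epsilon> V a \<delta>" "iso C f" "hom C f V W"
  shows "yd_module C H m u \<Delta> \<epsilon> W (chain C [f, a, Tm C (Idm C H) (inv C f)])
      (chain C [Tm C (Idm C H) f, \<delta>, inv C f])" (is ?module)
    and "yd_morphism C H V a \<delta> W (chain C [f, a, Tm C (Idm C H) (inv C f)])
      (chain C [Tm C (Idm C H) f, \<delta>, inv C f]) f" (is ?morphism)
proof -
  interpret yd_transport_diagrams C H V W m u \<Delta> \<epsilon> a \<delta> f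
    using assms by unfold_locales
  show ?module
    using term_rule_sound[OF valid_r_W_act_assoc[unfolded r_W_act_assoc_def]]
      term_rule_sound[OF valid_r_W_act_unit[unfolded r_W_act_unit_def]]
      term_rule_sound[OF valid_r_W_coassoc[unfolded r_W_coassoc_def]]
      term_rule_sound[OF valid_r_W_counit[unfolded r_W_counit_def]]
      term_rule_sound[OF valid_r_W_yd[unfolded r_W_yd_def]]
    by (simp add: yd_module_def hmodule_def hcomodule_def hom_def)
  show ?morphism
    using term_rule_sound[OF valid_r_iso_act[unfolded r_iso_act_def]]
      term_rule_sound[OF valid_r_iso_coact[unfolded r_iso_coact_def]]
    by (simp add: yd_morphism_def hom_def)
qed

section \<open>The smash product structure on A \<otimes> H\<close>

definition phi_inv :: "('o,'m) bcat \<Rightarrow> 'o \<Rightarrow> 'm \<Rightarrow> 'o \<Rightarrow> 'm" where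
  "phi_inv C H S A = Cmp C (Br C A H) (Tm C (Idm C A) S)"

lemma phi_iso:
  assumes "braided_monoidal_cat C" "iso C S" "hom C S H H"
  shows "iso C (phi C H S A)" "inv C (phi C H S A) = phi_inv C H S A"
proof -
  interpret braided_cat C using assms(1) by unfold_locales
  have S_types [simp]: "Dom C S = H" "Cod C S = H" using assms(3) by (simp_all add: hom_def)
  note Si = iso_inv_inv[OF assms(2)] and Si_types = dom_inv[OF assms(2)] cod_inv[OF assms(2)]
  have tm_Si: "iso C (Tm C (inv C S) (Idm C A))" "inv C (Tm C (inv C S) (Idm C A))
      = Tm C S (Idm C A)"
    using iso_tm[OF Si(1) iso_id] Si(2) by (simp_all add: inv_id)
  have binv: "iso C (Binv C H A)" "inv C (Binv C H A) = Br C A H"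
    using iso_inv_inv[OF br_iso[of A H]] by (simp_all add: Binv_def)
  note phi = iso_cmp[OF tm_Si(1) binv(1)]
  show "iso C (phi C H S A)"
    using phi(1) Si_types by (simp add: phi_def)
  have "inv C (phi C H S A) = Cmp C (Tm C S (Idm C A)) (Br C A H)"
    using phi(2) tm_Si(2) binv(2) Si_types by (simp add: phi_def)
  also have "\<dots> = phi_inv C H S A"
    using br_natural[of "Idm C A" S] by (simp add: phi_inv_def)
  finally show "inv C (phi C H S A) = phi_inv C H S A" .
qed

datatype smash_box = Hopf hopf_box | AntipodeInv | ActS | CoactS | Phi | PhiInv

instantiation smash_box :: diagram_signature
begin

fun box_dom_smash_box :: "smash_box \<Rightarrow> nat list" where
  "box_dom_smash_box (Hopf b) = box_dom b" | "box_dom_smash_box AntipodeInv = [0]"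
| "box_dom_smash_box ActS = [0,1,0]" | "box_dom_smash_box CoactS = [1,0]"
| "box_dom_smash_box Phi = [0,1]" | "box_dom_smash_box PhiInv = [1,0]"

fun box_cod_smash_box :: "smash_box \<Rightarrow> nat list" where
  "box_cod_smash_box (Hopf b) = box_cod b" | "box_cod_smash_box AntipodeInv = [0]"
| "box_cod_smash_box ActS = [1,0]" | "box_cod_smash_box CoactS = [0,1,0]"
| "box_cod_smash_box Phi = [1,0]" | "box_cod_smash_box PhiInv = [0,1]"

instance ..

end

locale smash_diagrams = hopf_act_data +
  assumes antipode_iso: "iso C S"
begin

lemma antipode_inv_types [simp]: "Dom C (inv C S) = H" "Cod C (inv C S) = H"
  using dom_inv[OF antipode_iso] cod_inv[OF antipode_iso] by simp_all

definition smash_sem :: "smash_box \<Rightarrow> _" where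
  "smash_sem b = (case b of Hopf h \<Rightarrow> hopf_sem h | AntipodeInv \<Rightarrow> inv C S
    | ActS \<Rightarrow> smash_act C H m \<Delta> S A aA | CoactS \<Rightarrow> smash_coact C H \<Delta> S A
    | Phi \<Rightarrow> phi C H S A | PhiInv \<Rightarrow> phi_inv C H S A)"

lemma smash_sem_simps [simp]:
  "smash_sem (Hopf h) = hopf_sem h" "smash_sem AntipodeInv = inv C S"
  "smash_sem ActS = smash_act C H m \<Delta> S A aA" "smash_sem CoactS = smash_coact C H \<Delta> S A"
  "smash_sem Phi = phi C H S A" "smash_sem PhiInv = phi_inv C H S A"
  by (simp_all add: smash_sem_def)

lemma smash_sem_hom:
  "hom C (smash_sem b) (tensor_obs C wire_obj (box_dom b)) (tensor_obs C wire_obj (box_cod b))"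
  using hopf_sem_hom
  by (cases b) (simp_all add: hom_def smash_act_def smash_coact_def phi_def phi_inv_def
      tens_act_def)

end

sublocale smash_diagrams \<subseteq> diagram_model C wire_obj smash_sem
  by unfold_locales (rule smash_sem_hom)

definition "rs_mul_assoc =
  term_rule
    (EC (EG (Box (Hopf Mul))) (ET (EG (Box (Hopf Mul))) (EI [0])))
    (EC (EG (Box (Hopf Mul))) (ET (EI [0]) (EG (Box (Hopf Mul)))))"

definition "rs_antipode_mul =
  term_rule
    (EC (EG (Box (Hopf Antipode))) (EG (Box (Hopf Mul))))
    (EC (EG (Box (Hopf Mul)))
      (EC (EG (Brd 0 0)) (ET (EG (Box (Hopf Antipode))) (EG (Box (Hopf Antipode))))))"

definition "rs_comul_antipode =
  term_rule
    (EC (EG (Box (Hopf Comul))) (EG (Box (Hopf Antipode))))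
    (EC (ET (EG (Box (Hopf Antipode))) (EG (Box (Hopf Antipode))))
      (EC (EG (Brd 0 0)) (EG (Box (Hopf Comul)))))"

definition "rs_R_act =
  term_rule
    (EG (Box (Hopf ActR)))
    (EC (ET (EG (Box (Hopf Mul))) (EI [1]))
      (EC (ET (EI [0]) (EG (Brd 1 0)))
      (EC (ET (ET (EI [0]) (EG (Box (Hopf Act)))) (EG (Box (Hopf Antipode))))
      (EC (ET (EI [0,0]) (EG (Brd 0 1)))
      (EC (ET (ET (EG (Box (Hopf Mul))) (EG (Box (Hopf Comul)))) (EI [1]))
      (EC (ET (ET (EI [0]) (EG (Brd 0 0))) (EI [1])) (ET (EG (Box (Hopf Comul))) (EI [0,1]))))))))"

definition "rs_antipode_inv_left =
  term_rule
    (EC (EG (Box AntipodeInv)) (EG (Box (Hopf Antipode))))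
    (EI [0])"

definition "rs_antipode_inv_right =
  term_rule
    (EC (EG (Box (Hopf Antipode))) (EG (Box AntipodeInv)))
    (EI [0])"

definition "rs_smash_act =
  term_rule
    (EG (Box ActS))
    (EC (ET (EI [1]) (EG (Box (Hopf Mul))))
      (EC (EIR 0 [1,0])
      (EC (ET (EG (Box AntipodeInv))
      (EC (ET (EG (Box (Hopf Act))) (EG (Box (Hopf Mul))))
      (EC (ET (EI [0]) (ET (EG (Brd 0 1)) (EI [0]))) (ET (EG (Box (Hopf Comul))) (EI [1,0])))))
      (ET (EG (Box (Hopf Comul))) (EI [1,0])))))"

definition "rs_smash_coact =
  term_rule
    (EG (Box CoactS))
    (EC (ET (EG (Box (Hopf Antipode))) (EI [1,0]))
      (EC (EBL [1,0] 0) (ET (EI [1]) (EG (Box (Hopf Comul))))))"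

definition "rs_phi =
  term_rule
    (EG (Box Phi))
    (EC (EG (BrdI 0 1)) (ET (EG (Box AntipodeInv)) (EI [1])))"

definition "rs_phi_inv =
  term_rule
    (EG (Box PhiInv))
    (EC (EG (Brd 1 0)) (ET (EI [1]) (EG (Box (Hopf Antipode)))))"

definition "rs_antipode_inv_mul =
  term_rule
    (EC (EG (Box AntipodeInv)) (EG (Box (Hopf Mul))))
    (EC (EG (Box (Hopf Mul)))
      (EC (EG (BrdI 0 0)) (ET (EG (Box AntipodeInv)) (EG (Box AntipodeInv)))))"

definition "rs_phi_phi_inv = term_rule (EC (EG (Box Phi)) (EG (Box PhiInv))) (EI [1,0])"

definition "rs_smash_act_phi =
  term_rule
    (EC (EG (Box ActS)) (ET (EI [0]) (EG (Box Phi))))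
    (EC (EG (Box Phi)) (EG (Box (Hopf ActR))))"

definition "rs_smash_act_transport =
  term_rule
    (EG (Box ActS))
    (EC (EG (Box Phi)) (EC (EG (Box (Hopf ActR))) (ET (EI [0]) (EG (Box PhiInv)))))"

definition "rs_smash_coact_transport =
  term_rule
    (EC (ET (EI [0]) (EG (Box Phi))) (EC (ET (EG (Box (Hopf Comul))) (EI [1])) (EG (Box PhiInv))))
    (EG (Box CoactS))"

lemmas smash_rule_defs = term_rule_def natBL_def natBR_def natIL_def natIR_def cancBI_def cancIB_def
  rs_mul_assoc_def rs_antipode_mul_def rs_comul_antipode_def rs_R_act_def rs_antipode_inv_left_def
      rs_antipode_inv_right_def rs_smash_act_def rs_smash_coact_def rs_phi_def rs_phi_inv_def
      rs_antipode_inv_mul_def rs_phi_phi_inv_def rs_smash_act_phi_def rs_smash_act_transport_def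
      rs_smash_coact_transport_def

context smash_diagrams
begin

lemma valid_rs_basic:
  "valid_rule rs_mul_assoc" "valid_rule rs_R_act" "valid_rule rs_smash_act" "valid_rule
      rs_smash_coact"
  "valid_rule rs_phi" "valid_rule rs_phi_inv"
  unfolding rs_mul_assoc_def rs_R_act_def rs_smash_act_def rs_smash_coact_def rs_phi_def
      rs_phi_inv_def
  by (rule valid_term_rule; simp add: hopf_axioms R_act_def smash_act_def smash_coact_def phi_def
      phi_inv_def
      tens_act_def Let_def)+

lemma valid_rs_antipode:
  "valid_rule rs_antipode_mul" "valid_rule rs_comul_antipode"
  "valid_rule rs_antipode_inv_left" "valid_rule rs_antipode_inv_right"
  unfolding rs_antipode_mul_def rs_comul_antipode_def rs_antipode_inv_left_def
      rs_antipode_inv_right_def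
  by (rule valid_term_rule; simp add: antipode_antimultiplicative[OF braided hopf]
      comul_antipode[OF braided hopf] inv_cmp_self[OF antipode_iso] cmp_inv_self[OF antipode_iso])+

lemma valid_rs_antipode_inv_mul: "valid_rule rs_antipode_inv_mul"
  unfolding rs_antipode_inv_mul_def term_rule_def
  by (rule valid_run[where ops="[Rv 0 0 (cancBI 0 0), Rv 1 0 rs_antipode_inv_right,
      Rv 1 1 rs_antipode_inv_right, Sw 2, Sw 3, Rv 3 0 rs_antipode_mul, Rw 4 0 rs_antipode_inv_left,
      Rv 0 0 (natIL (Box AntipodeInv) 0), Rv 1 0 (natIR 0 (Box AntipodeInv))]"])
    (simp add: valid_rs_antipode valid_natBL valid_natBR valid_natIL valid_natIR valid_cancBI
      valid_cancIB,
      simp_all add: smash_rule_defs fits_def after_node_def eval_nat_numeral)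

lemma valid_rs_phi_phi_inv: "valid_rule rs_phi_phi_inv"
  unfolding rs_phi_phi_inv_def
  using cmp_inv_self[OF phi_iso(1)[OF braided antipode_iso hopf_axioms(5)]]
    phi_iso(2)[OF braided antipode_iso hopf_axioms(5)]
  by (intro valid_term_rule) (simp_all add: phi_def)

lemma valid_rs_smash_act_phi: "valid_rule rs_smash_act_phi"
  unfolding rs_smash_act_phi_def term_rule_def
  by (rule valid_run[where ops="[Rw 0 1 rs_phi, Rw 2 0 rs_smash_act, Sw 7,
      Rw 8 1 (natIR 0 (Box (Hopf Mul))), Rw 0 1 (natIL (Box AntipodeInv) 1), Sw 1, Sw 2, Sw 3, Sw 4,
      Sw 5, Sw 6, Sw 7, Rw 8 2 (natIR 0 (Box AntipodeInv)), Sw 2, Sw 3, Sw 4,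
      Rw 5 0 (natIL (Box AntipodeInv) 1), Rw 6 1 (natIL (Box AntipodeInv) 0),
      Rw 7 2 (natIL (Box AntipodeInv) 0), Rw 4 0 (natIR 0 (Box (Hopf Act))), Sw 6, Sw 7, Sw 8, Sw 9,
      Sw 10, Sw 11, Rw 10 2 rs_mul_assoc, Sw 0, Sw 1, Rv 2 2 (cancIB 0 0),
      Rv 3 2 (natIR 0 (Brd 0 1)), Sw 5, Sw 6, Rv 7 2 (natIL (BrdI 0 0) 0), Sw 9,
      Rv 8 3 (natIL (Box AntipodeInv) 0), Rv 10 2 (natIL (Box AntipodeInv) 0), Sw 9, Sw 8,
      Rv 10 2 (natIL (Box (Hopf Mul)) 0), Rv 12 2 rs_antipode_inv_left,
      Rv 11 2 (natIR 0 (Box (Hopf Antipode))), Rv 12 2 (natIR 0 (Box AntipodeInv)),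
      Rv 7 2 (natIR 0 (Box AntipodeInv)), Rv 8 2 (natIL (Box AntipodeInv) 0), Sw 7,
      Rv 7 2 rs_antipode_inv_mul, Sw 8, Sw 7, Rv 9 2 rs_antipode_inv_mul, Sw 10, Sw 9, Sw 8, Sw 7,
      Rv 3 1 (cancIB 0 0), Sw 4, Rw 1 1 (natBL (Box (Hopf Comul)) 0),
      Rv 6 0 (natIR 0 (Box (Hopf Act))), Sw 7, Rv 4 1 (natIR 0 (Box (Hopf Act))), Sw 5,
      Rv 6 2 (cancIB 0 1), Rv 8 0 (natIL (Box (Hopf Mul)) 1), Sw 7, Sw 6, Sw 5, Sw 4, Sw 3, Sw 2,
      Rv 8 0 (natIL (Box (Hopf Mul)) 1), Rv 9 0 (natIL (Box AntipodeInv) 1), Rv 0 0 rs_R_act,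
      Rv 1 0 rs_phi]"])
    (simp add: valid_rs_antipode valid_rs_basic valid_rs_antipode_inv_mul valid_natBL valid_natBR
      valid_natIL valid_natIR valid_cancBI valid_cancIB,
      simp_all add: smash_rule_defs fits_def after_node_def eval_nat_numeral)

lemma valid_rs_smash_act_transport: "valid_rule rs_smash_act_transport"
  unfolding rs_smash_act_transport_def term_rule_def
  by (rule valid_run[where ops="[Rv 0 1 rs_phi_phi_inv, Rw 1 0 rs_smash_act_phi]"])
    (simp add: valid_rs_phi_phi_inv valid_rs_smash_act_phi valid_natBL valid_natBR valid_natIL
      valid_natIR valid_cancBI valid_cancIB,
      simp_all add: smash_rule_defs fits_def after_node_def eval_nat_numeral)

lemma valid_rs_smash_coact_transport: "valid_rule rs_smash_coact_transport"
  unfolding rs_smash_coact_transport_def term_rule_def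
  by (rule valid_run[where ops="[Rw 2 1 rs_phi, Rw 0 0 rs_phi_inv,
      Rw 0 0 (natBR 1 (Box (Hopf Antipode))), Rw 1 0 rs_comul_antipode, Sw 3, Sw 4,
      Rw 3 1 rs_antipode_inv_left, Rv 0 0 (natBR 1 (Box (Hopf Comul))), Rv 1 0 (natBR 1 (Brd 0 0)),
      Sw 4, Rw 3 1 (cancIB 0 1), Rv 0 0 rs_smash_coact]"])
    (simp add: valid_rs_antipode valid_rs_basic valid_natBL valid_natBR valid_natIL valid_natIR
      valid_cancBI valid_cancIB,
      simp_all add: smash_rule_defs fits_def after_node_def eval_nat_numeral)

end

lemma smash_act_transport:
  assumes "braided_monoidal_cat C" "hopf_algebra C H m u \<Delta> \<epsilon> S" "iso C S" "hom C aA (Tob C H A) A"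
  shows "smash_act C H m \<Delta> S A aA
    = chain C [phi C H S A, R_act C H m \<Delta> S A aA, Tm C (Idm C H) (phi_inv C H S A)]"
proof -
  interpret smash_diagrams C H A m u \<Delta> \<epsilon> S aA
    using assms by unfold_locales
  show ?thesis
    using term_rule_sound[OF valid_rs_smash_act_transport[unfolded rs_smash_act_transport_def]]
    by simp
qed

lemma smash_coact_transport:
  assumes "braided_monoidal_cat C" "hopf_algebra C H m u \<Delta> \<epsilon> S" "iso C S"
  shows "smash_coact C H \<Delta> S A
    = chain C [Tm C (Idm C H) (phi C H S A), R_coact C \<Delta> A, phi_inv C H S A]"
proof -
  interpret braided_cat C using assms(1) by unfold_locales
  txt \<open>No action on A is involved; the trivial one serves to enter the locale.\<close>
  have "hom C (Tm C \<epsilon> (Idm C A)) (Tob C H A) A"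
    using assms(2) by (simp add: hopf_algebra_def Let_def hom_def)
  then interpret smash_diagrams C H A m u \<Delta> \<epsilon> S "Tm C \<epsilon> (Idm C A)"
    using assms by unfold_locales
  show ?thesis
    using term_rule_sound[OF valid_rs_smash_coact_transport[unfolded rs_smash_coact_transport_def]]
    by (simp add: R_coact_def)
qed

theorem lemma4p4:
  fixes C :: "('o, 'm) bcat"
    and H A :: 'o
    and m u \<Delta> \<epsilon> S aA mA uA :: 'm
  assumes "braided_monoidal_cat C"
    and "hopf_algebra C H m u \<Delta> \<epsilon> S"
    and "iso C S"
    and "hmod_algebra C H m u \<Delta> \<epsilon> A aA mA uA"
  shows "iso C (phi C H S A)
    \<and> inv C (phi C H S A) = Cmp C (Br C A H) (Tm C (Idm C A) S)
    \<and> smash_act C H m \<Delta> S A aA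
        = chain C [phi C H S A, R_act C H m \<Delta> S A aA, Tm C (Idm C H) (inv C (phi C H S A))]
    \<and> smash_coact C H \<Delta> S A
        = chain C [Tm C (Idm C H) (phi C H S A), R_coact C \<Delta> A, inv C (phi C H S A)]
    \<and> yd_module C H m u \<Delta> \<epsilon> (Tob C A H) (smash_act C H m \<Delta> S A aA) (smash_coact C H \<Delta> S A)
    \<and> yd_morphism C H (Tob C H A) (R_act C H m \<Delta> S A aA) (R_coact C \<Delta> A)
        (Tob C A H) (smash_act C H m \<Delta> S A aA) (smash_coact C H \<Delta> S A) (phi C H S A)"
proof -
  interpret hopf_act_data C H A m u \<Delta> \<epsilon> S aA
    using assms by unfold_locales (simp_all add: hmod_algebra_def hmodule_def)
  have module: "hmodule C H m u A aA"
    using assms(4) by (simp add: hmod_algebra_def)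
  note phi = phi_iso[OF assms(1,3) hopf_axioms(5), of A]
  have phi_hom: "hom C (phi C H S A) (Tob C H A) (Tob C A H)"
    using dom_inv[OF assms(3)] cod_inv[OF assms(3)] by (simp add: hom_def phi_def)
  have act: "smash_act C H m \<Delta> S A aA
      = chain C [phi C H S A, R_act C H m \<Delta> S A aA, Tm C (Idm C H) (inv C (phi C H S A))]"
    using smash_act_transport[OF assms(1-3) act_hom] phi(2) by simp
  have coact: "smash_coact C H \<Delta> S A
      = chain C [Tm C (Idm C H) (phi C H S A), R_coact C \<Delta> A, inv C (phi C H S A)]"
    using smash_coact_transport[OF assms(1-3)] phi(2) by simp
  note transport = yd_transport[OF assms(1) hopf_axioms(1-4)
      R_yd_module[OF assms(1,2) module] phi(1) phi_hom]
  show ?thesis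
    using phi act coact transport by (simp add: phi_inv_def)
qed

end
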